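(* The polynomial algebra $P_n=K[x_1,\dots,x_n]$, with its natural $\mathbb{S}_n$-module structure, is up to isomorphism the only faithful simple $\mathbb{S}_n$-module. Consequently, the Jacobson radical of $\mathbb{S}_n$ is zero and $\mathbb{S}_n$ is a primitive algebra.
   Context: $K$ is a field. $\mathbb{S}_n$ is the $K$-algebra generated by $x_1,\dots,x_n,y_1,\dots,y_n$ subject to the defining relations $y_ix_i=1$ for all $i$, and $[x_i,y_j]=[x_i,x_j]=[y_i,y_j]=0$ for all $i\ne j$. The natural $\mathbb{S}_n$-module structure on $P_n$ is as follows: $x_i$ acts by multiplication; for a monomial $x^\alpha=x_1^{\alpha_1}\cdots x_n^{\alpha_n}$, $y_i$ sends $x^\alpha$ to $x^{\alpha}/x_i$ if $\alpha_i\ge1$ and to $0$ if $\alpha_i=0$. *)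

theory Defs
  imports Complex_Main "HOL-Library.Function_Algebras"
begin

datatype gen = Xg nat | Yg nat

fun gen_idx :: "gen \<Rightarrow> nat" where
  "gen_idx (Xg i) = i"
| "gen_idx (Yg i) = i"

text \<open>Words in the generators x_1..x_n, y_1..y_n (indices 0..n-1).\<close>
definition words :: "nat \<Rightarrow> gen list set" where
  "words n = {w. \<forall>a\<in>set w. gen_idx a < n}"

text \<open>The free associative K-algebra on the 2n generators: finitely supported
  K-valued functions on words.\<close>
definition Fn :: "nat \<Rightarrow> (gen list \<Rightarrow> 'k::field) set" where
  "Fn n = {f. finite {w. f w \<noteq> 0} \<and> (\<forall>w. f w \<noteq> 0 \<longrightarrow> w \<in> words n)}"

definition delta :: "gen list \<Rightarrow> gen list \<Rightarrow> 'k::field" where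
  "delta u = (\<lambda>w. if w = u then 1 else 0)"

definition fmul :: "(gen list \<Rightarrow> 'k::field) \<Rightarrow> (gen list \<Rightarrow> 'k) \<Rightarrow> gen list \<Rightarrow> 'k" where
  "fmul f g = (\<lambda>w. \<Sum>i\<le>length w. f (take i w) * g (drop i w))"

definition Sn_rels :: "nat \<Rightarrow> (gen list \<Rightarrow> 'k::field) set" where
  "Sn_rels n =
     {(\<lambda>w. delta [Yg i, Xg i] w - delta [] w) | i. i < n}
   \<union> {(\<lambda>w. delta [Xg i, Yg j] w - delta [Yg j, Xg i] w) | i j. i < n \<and> j < n \<and> i \<noteq> j}
   \<union> {(\<lambda>w. delta [Xg i, Xg j] w - delta [Xg j, Xg i] w) | i j. i < n \<and> j < n \<and> i \<noteq> j}
   \<union> {(\<lambda>w. delta [Yg i, Yg j] w - delta [Yg j, Yg i] w) | i j. i < n \<and> j < n \<and> i \<noteq> j}"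

text \<open>The two-sided ideal of the free algebra generated by the relations;
  S_n is the quotient Fn n / Sn_ideal n.\<close>
inductive_set Sn_ideal :: "nat \<Rightarrow> (gen list \<Rightarrow> 'k::field) set" for n where
  rel: "r \<in> Sn_rels n \<Longrightarrow> r \<in> Sn_ideal n"
| zero: "(\<lambda>w. 0) \<in> Sn_ideal n"
| add: "f \<in> Sn_ideal n \<Longrightarrow> g \<in> Sn_ideal n \<Longrightarrow> (\<lambda>w. f w + g w) \<in> Sn_ideal n"
| smul: "f \<in> Sn_ideal n \<Longrightarrow> (\<lambda>w. c * f w) \<in> Sn_ideal n"
| lmul: "f \<in> Sn_ideal n \<Longrightarrow> u \<in> words n \<Longrightarrow> fmul (delta u) f \<in> Sn_ideal n"
| rmul: "f \<in> Sn_ideal n \<Longrightarrow> u \<in> words n \<Longrightarrow> fmul f (delta u) \<in> Sn_ideal n"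

definition Sn_module ::
  "nat \<Rightarrow> ('k::field \<Rightarrow> 'm::ab_group_add \<Rightarrow> 'm) \<Rightarrow> 'm set
     \<Rightarrow> (nat \<Rightarrow> 'm \<Rightarrow> 'm) \<Rightarrow> (nat \<Rightarrow> 'm \<Rightarrow> 'm) \<Rightarrow> bool" where
  "Sn_module n sc M X Y \<longleftrightarrow>
     vector_space sc \<and> module.subspace sc M \<and>
     (\<forall>i<n. \<forall>m\<in>M. X i m \<in> M \<and> Y i m \<in> M) \<and>
     (\<forall>i<n. \<forall>m\<in>M. \<forall>m'\<in>M. X i (m + m') = X i m + X i m' \<and> Y i (m + m') = Y i m + Y i m') \<and>
     (\<forall>i<n. \<forall>c. \<forall>m\<in>M. X i (sc c m) = sc c (X i m) \<and> Y i (sc c m) = sc c (Y i m)) \<and>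
     (\<forall>i<n. \<forall>m\<in>M. Y i (X i m) = m) \<and>
     (\<forall>i<n. \<forall>j<n. i \<noteq> j \<longrightarrow> (\<forall>m\<in>M.
         X i (Y j m) = Y j (X i m) \<and> X i (X j m) = X j (X i m) \<and> Y i (Y j m) = Y j (Y i m)))"

fun letter_act :: "(nat \<Rightarrow> 'm \<Rightarrow> 'm) \<Rightarrow> (nat \<Rightarrow> 'm \<Rightarrow> 'm) \<Rightarrow> gen \<Rightarrow> 'm \<Rightarrow> 'm" where
  "letter_act X Y (Xg i) = X i"
| "letter_act X Y (Yg i) = Y i"

text \<open>Action of a word a_1 a_2 ... a_k (the product a_1 * ... * a_k).\<close>
fun wact :: "(nat \<Rightarrow> 'm \<Rightarrow> 'm) \<Rightarrow> (nat \<Rightarrow> 'm \<Rightarrow> 'm) \<Rightarrow> gen list \<Rightarrow> 'm \<Rightarrow> 'm" where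
  "wact X Y [] m = m"
| "wact X Y (a # w) m = letter_act X Y a (wact X Y w m)"

definition actF :: "('k::field \<Rightarrow> 'm::ab_group_add \<Rightarrow> 'm) \<Rightarrow> (nat \<Rightarrow> 'm \<Rightarrow> 'm) \<Rightarrow> (nat \<Rightarrow> 'm \<Rightarrow> 'm)
     \<Rightarrow> (gen list \<Rightarrow> 'k) \<Rightarrow> 'm \<Rightarrow> 'm" where
  "actF sc X Y f m = (\<Sum>w\<in>{w. f w \<noteq> 0}. sc (f w) (wact X Y w m))"

text \<open>Faithful: the annihilator in S_n is zero, i.e. every element of the free
  algebra acting as zero on M lies in the defining ideal.\<close>
definition Sn_faithful ::
  "nat \<Rightarrow> ('k::field \<Rightarrow> 'm::ab_group_add \<Rightarrow> 'm) \<Rightarrow> 'm set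
     \<Rightarrow> (nat \<Rightarrow> 'm \<Rightarrow> 'm) \<Rightarrow> (nat \<Rightarrow> 'm \<Rightarrow> 'm) \<Rightarrow> bool" where
  "Sn_faithful n sc M X Y \<longleftrightarrow>
     (\<forall>f\<in>Fn n. (\<forall>m\<in>M. actF sc X Y f m = 0) \<longrightarrow> f \<in> Sn_ideal n)"

definition Sn_simple ::
  "nat \<Rightarrow> ('k::field \<Rightarrow> 'm::ab_group_add \<Rightarrow> 'm) \<Rightarrow> 'm set
     \<Rightarrow> (nat \<Rightarrow> 'm \<Rightarrow> 'm) \<Rightarrow> (nat \<Rightarrow> 'm \<Rightarrow> 'm) \<Rightarrow> bool" where
  "Sn_simple n sc M X Y \<longleftrightarrow>
     M \<noteq> {0} \<and>
     (\<forall>U. module.subspace sc U \<and> U \<subseteq> M \<and> (\<forall>i<n. \<forall>u\<in>U. X i u \<in> U \<and> Y i u \<in> U)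
          \<longrightarrow> U = {0} \<or> U = M)"

text \<open>P_n = K[x_1..x_n]: a polynomial is its coefficient function on exponent
  vectors alpha (alpha i = exponent of x_{i+1}), finitely supported, involving only
  the first n variables.\<close>
definition Pn :: "nat \<Rightarrow> ((nat \<Rightarrow> nat) \<Rightarrow> 'k::field) set" where
  "Pn n = {p. finite {\<alpha>. p \<alpha> \<noteq> 0} \<and> (\<forall>\<alpha>. p \<alpha> \<noteq> 0 \<longrightarrow> (\<forall>i\<ge>n. \<alpha> i = 0))}"

definition Pscale :: "'k::field \<Rightarrow> ((nat \<Rightarrow> nat) \<Rightarrow> 'k) \<Rightarrow> (nat \<Rightarrow> nat) \<Rightarrow> 'k" where
  "Pscale c p = (\<lambda>\<alpha>. c * p \<alpha>)"

text \<open>x_i acts by multiplication by x_i.\<close>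
definition xop :: "nat \<Rightarrow> ((nat \<Rightarrow> nat) \<Rightarrow> 'k::field) \<Rightarrow> (nat \<Rightarrow> nat) \<Rightarrow> 'k" where
  "xop i p = (\<lambda>\<alpha>. if 1 \<le> \<alpha> i then p (\<alpha>(i := \<alpha> i - 1)) else 0)"

text \<open>y_i sends x^alpha to x^alpha / x_i if alpha_i \<ge> 1, and to 0 otherwise.\<close>
definition yop :: "nat \<Rightarrow> ((nat \<Rightarrow> nat) \<Rightarrow> 'k::field) \<Rightarrow> (nat \<Rightarrow> nat) \<Rightarrow> 'k" where
  "yop i p = (\<lambda>\<alpha>. p (\<alpha>(i := \<alpha> i + 1)))"

definition Sn_iso_Pn ::
  "nat \<Rightarrow> ('k::field \<Rightarrow> 'm::ab_group_add \<Rightarrow> 'm) \<Rightarrow> 'm set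
     \<Rightarrow> (nat \<Rightarrow> 'm \<Rightarrow> 'm) \<Rightarrow> (nat \<Rightarrow> 'm \<Rightarrow> 'm) \<Rightarrow> bool" where
  "Sn_iso_Pn n sc M X Y \<longleftrightarrow>
     (\<exists>\<phi> :: 'm \<Rightarrow> ((nat \<Rightarrow> nat) \<Rightarrow> 'k).
        bij_betw \<phi> M (Pn n) \<and>
        (\<forall>m\<in>M. \<forall>m'\<in>M. \<phi> (m + m') = (\<lambda>\<alpha>. \<phi> m \<alpha> + \<phi> m' \<alpha>)) \<and>
        (\<forall>c. \<forall>m\<in>M. \<phi> (sc c m) = Pscale c (\<phi> m)) \<and>
        (\<forall>i<n. \<forall>m\<in>M. \<phi> (X i m) = xop i (\<phi> m) \<and> \<phi> (Y i m) = yop i (\<phi> m)))"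

text \<open>Left ideals of S_n, as left ideals of the free algebra containing the
  defining ideal.\<close>
definition Sn_left_ideal :: "nat \<Rightarrow> (gen list \<Rightarrow> 'k::field) set \<Rightarrow> bool" where
  "Sn_left_ideal n L \<longleftrightarrow>
     Sn_ideal n \<subseteq> L \<and> L \<subseteq> Fn n \<and>
     (\<forall>f\<in>L. \<forall>g\<in>L. (\<lambda>w. f w + g w) \<in> L) \<and>
     (\<forall>r\<in>Fn n. \<forall>f\<in>L. fmul r f \<in> L)"

definition Sn_max_left_ideal :: "nat \<Rightarrow> (gen list \<Rightarrow> 'k::field) set \<Rightarrow> bool" where
  "Sn_max_left_ideal n L \<longleftrightarrow>
     Sn_left_ideal n L \<and> L \<noteq> Fn n \<and>
     (\<forall>L'. Sn_left_ideal n L' \<and> L \<subseteq> L' \<and> L' \<noteq> Fn n \<longrightarrow> L' = L)"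

text \<open>Jacobson radical of S_n: intersection of all maximal left ideals
  (preimage in the free algebra).\<close>
definition Sn_jacobson :: "nat \<Rightarrow> (gen list \<Rightarrow> 'k::field) set" where
  "Sn_jacobson n = {a \<in> Fn n. \<forall>L. Sn_max_left_ideal n L \<longrightarrow> a \<in> L}"

text \<open>S_n is (left) primitive: it has a faithful simple left module. Every simple
  module is S_n/L for a maximal left ideal L, whose annihilator is
  {a. a S_n \<subseteq> L}; so primitivity means this annihilator is zero for some L.\<close>
definition Sn_primitive :: "nat \<Rightarrow> 'k::field itself \<Rightarrow> bool" where
  "Sn_primitive n _ \<longleftrightarrow>
     (\<exists>L :: (gen list \<Rightarrow> 'k) set. Sn_max_left_ideal n L \<and>
        {a \<in> Fn n. \<forall>r\<in>Fn n. fmul a r \<in> L} = Sn_ideal n)"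

end

theory Submission
  imports Defs
begin

(*
  1. The free algebra acts on every S_n-module, and the defining ideal acts trivially.
  2. Every word is congruent modulo the ideal to a normal word x^a y^b.
  3. P_n is simple (lowering operators y^\<alpha> reach the constants, raising operators x^\<gamma>
     reach every monomial) and faithful (normal words act linearly independently on P_n).
  4. Homomorphisms pull back faithfulness and simplicity; Schur's lemma.
  5. In a faithful module the nonzero element \<Prod>_j (1 - x_j y_j) of S_n produces a nonzero
     vacuum vector m0; p \<mapsto> p(x) m0 is a nonzero homomorphism P_n \<rightarrow> M, bijective by Schur.
  6. In any faithful simple module the annihilators of nonzero vectors are maximal left
     ideals; hence the Jacobson radical vanishes and S_n is primitive.
*)


section \<open>The free algebra on the generators\<close>

definition supp :: "(gen list \<Rightarrow> 'k::field) \<Rightarrow> gen list set" where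
  "supp f = {w. f w \<noteq> 0}"

lemma words_Nil [simp]: "[] \<in> words n"
  by (auto simp: words_def)

lemma words_Cons [simp]: "(a # w \<in> words n) = (gen_idx a < n \<and> w \<in> words n)"
  by (auto simp: words_def)

lemma words_append [simp]: "(u @ v \<in> words n) = (u \<in> words n \<and> v \<in> words n)"
  by (auto simp: words_def)

lemma Fn_iff: "f \<in> Fn n \<longleftrightarrow> finite (supp f) \<and> supp f \<subseteq> words n"
  by (auto simp: Fn_def supp_def)

lemma fmul_delta_left:
  "fmul (delta u) f w = (if length u \<le> length w \<and> take (length u) w = u then f (drop (length u) w) else 0)"
proof -
  have "fmul (delta u) f w = (\<Sum>i\<le>length w. if i = length u then (if take (length u) w = u then f (drop (length u) w) else 0) else 0)"
    unfolding fmul_def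
  proof (rule sum.cong[OF refl])
    fix i assume "i \<in> {..length w}"
    then have "length (take i w) = i" by simp
    then show "delta u (take i w) * f (drop i w) = (if i = length u then (if take (length u) w = u then f (drop (length u) w) else 0) else 0)"
      by (auto simp: delta_def)
  qed
  also have "\<dots> = (if length u \<le> length w \<and> take (length u) w = u then f (drop (length u) w) else 0)"
    by (subst sum.delta) auto
  finally show ?thesis .
qed

lemma fmul_delta_right:
  "fmul f (delta u) w = (if length u \<le> length w \<and> drop (length w - length u) w = u then f (take (length w - length u) w) else 0)"
proof -
  have "fmul f (delta u) w = (\<Sum>i\<le>length w. if i = length w - length u then (if length u \<le> length w \<and> drop (length w - length u) w = u then f (take (length w - length u) w) else 0) else 0)"
    unfolding fmul_def delta_def
    by (rule sum.cong) auto
  also have "\<dots> = (if length u \<le> length w \<and> drop (length w - length u) w = u then f (take (length w - length u) w) else 0)"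
    by (subst sum.delta) auto
  finally show ?thesis .
qed

lemma fmul_delta_Nil_right [simp]: "fmul f (delta []) = f"
  by (auto simp: fun_eq_iff fmul_delta_right)

lemma supp_fmul_delta_left: "supp (fmul (delta u) f) = (\<lambda>v. u @ v) ` supp f"
proof (rule set_eqI)
  fix w
  show "w \<in> supp (fmul (delta u) f) \<longleftrightarrow> w \<in> (\<lambda>v. u @ v) ` supp f"
  proof
    assume "w \<in> supp (fmul (delta u) f)"
    then have h: "length u \<le> length w \<and> take (length u) w = u" "f (drop (length u) w) \<noteq> 0"
      by (auto simp: supp_def fmul_delta_left split: if_splits)
    then have "w = u @ drop (length u) w" by (metis append_take_drop_id)
    then show "w \<in> (\<lambda>v. u @ v) ` supp f" using h by (auto simp: supp_def)
  next
    assume "w \<in> (\<lambda>v. u @ v) ` supp f"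
    then show "w \<in> supp (fmul (delta u) f)" by (auto simp: supp_def fmul_delta_left)
  qed
qed

lemma supp_fmul_delta_right: "supp (fmul f (delta u)) = (\<lambda>v. v @ u) ` supp f"
proof (rule set_eqI)
  fix w
  show "w \<in> supp (fmul f (delta u)) \<longleftrightarrow> w \<in> (\<lambda>v. v @ u) ` supp f"
  proof
    assume "w \<in> supp (fmul f (delta u))"
    then have h: "length u \<le> length w \<and> drop (length w - length u) w = u" "f (take (length w - length u) w) \<noteq> 0"
      by (auto simp: supp_def fmul_delta_right split: if_splits)
    then have "w = take (length w - length u) w @ u" by (metis append_take_drop_id)
    then show "w \<in> (\<lambda>v. v @ u) ` supp f" using h by (auto simp: supp_def)
  next
    assume "w \<in> (\<lambda>v. v @ u) ` supp f"
    then show "w \<in> supp (fmul f (delta u))" by (auto simp: supp_def fmul_delta_right)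
  qed
qed

lemma Fn_zero [simp]: "(\<lambda>w. 0) \<in> Fn n"
  by (auto simp: Fn_iff supp_def)

lemma Fn_add: "f \<in> Fn n \<Longrightarrow> g \<in> Fn n \<Longrightarrow> (\<lambda>w. f w + g w) \<in> Fn n"
proof -
  assume a: "f \<in> Fn n" "g \<in> Fn n"
  have "supp (\<lambda>w. f w + g w) \<subseteq> supp f \<union> supp g" by (auto simp: supp_def)
  with a show ?thesis unfolding Fn_iff by (meson finite_UnI finite_subset le_sup_iff order_trans)
qed

lemma Fn_smul: "f \<in> Fn n \<Longrightarrow> (\<lambda>w. c * f w) \<in> Fn n"
proof -
  assume a: "f \<in> Fn n"
  have "supp (\<lambda>w. c * f w) \<subseteq> supp f" by (auto simp: supp_def)
  with a show ?thesis unfolding Fn_iff by (meson finite_subset order_trans)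
qed

lemma Fn_diff: "f \<in> Fn n \<Longrightarrow> g \<in> Fn n \<Longrightarrow> (\<lambda>w. f w - g w) \<in> Fn n"
  using Fn_add[of f n "\<lambda>w. (-1) * g w"] Fn_smul[of g n "-1"] by simp

lemma Fn_delta: "u \<in> words n \<Longrightarrow> (delta u :: gen list \<Rightarrow> 'k::field) \<in> Fn n"
  by (simp add: Fn_iff supp_def delta_def)

lemma Fn_fmul_delta_left: "f \<in> Fn n \<Longrightarrow> u \<in> words n \<Longrightarrow> fmul (delta u) f \<in> Fn n"
  by (auto simp: Fn_iff supp_fmul_delta_left)

lemma Fn_fmul_delta_right: "f \<in> Fn n \<Longrightarrow> u \<in> words n \<Longrightarrow> fmul f (delta u) \<in> Fn n"
  by (auto simp: Fn_iff supp_fmul_delta_right)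

lemma fmul_expand:
  fixes a r :: "gen list \<Rightarrow> 'k::field"
  assumes "finite S" "supp a \<subseteq> S"
  shows "fmul a r = (\<lambda>w. \<Sum>u\<in>S. a u * fmul (delta u) r w)"
proof
  fix w
  have "(\<Sum>u\<in>S. a u * fmul (delta u) r w) = (\<Sum>u\<in>S. \<Sum>i\<le>length w. a u * (delta u (take i w) * r (drop i w)))"
    unfolding fmul_def by (simp add: sum_distrib_left)
  also have "\<dots> = (\<Sum>i\<le>length w. \<Sum>u\<in>S. a u * (delta u (take i w) * r (drop i w)))"
    by (rule sum.swap)
  also have "\<dots> = (\<Sum>i\<le>length w. a (take i w) * r (drop i w))"
  proof (rule sum.cong[OF refl])
    fix i
    have "(\<Sum>u\<in>S. a u * (delta u (take i w) * r (drop i w))) = (\<Sum>u\<in>S. if take i w = u then a (take i w) * r (drop i w) else 0)"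
      by (rule sum.cong) (auto simp: delta_def)
    also have "\<dots> = (if take i w \<in> S then a (take i w) * r (drop i w) else 0)"
      using assms(1) by (simp add: sum.delta')
    also have "\<dots> = a (take i w) * r (drop i w)"
      using assms(2) by (auto simp: supp_def)
    finally show "(\<Sum>u\<in>S. a u * (delta u (take i w) * r (drop i w))) = a (take i w) * r (drop i w)" .
  qed
  finally show "fmul a r w = (\<Sum>u\<in>S. a u * fmul (delta u) r w)"
    unfolding fmul_def by simp
qed

lemma Fn_fmul:
  assumes a: "a \<in> Fn n" and r: "r \<in> Fn n"
  shows "fmul a r \<in> Fn n"
proof -
  have "supp (fmul a r) \<subseteq> (\<Union>u\<in>supp a. supp (fmul (delta u) r))"
  proof
    fix w assume "w \<in> supp (fmul a r)"
    then have "(\<Sum>u\<in>supp a. a u * fmul (delta u) r w) \<noteq> 0"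
      using fmul_expand[of "supp a" a r] a by (auto simp: supp_def Fn_iff)
    then obtain u where "u \<in> supp a" "fmul (delta u) r w \<noteq> 0"
      by (metis (no_types, lifting) mult_zero_right sum.neutral)
    then show "w \<in> (\<Union>u\<in>supp a. supp (fmul (delta u) r))" by (auto simp: supp_def)
  qed
  moreover have "finite (\<Union>u\<in>supp a. supp (fmul (delta u) r))"
    and "(\<Union>u\<in>supp a. supp (fmul (delta u) r)) \<subseteq> words n"
    using a r by (auto simp: Fn_iff supp_fmul_delta_left)
  ultimately show ?thesis unfolding Fn_iff by (meson finite_subset order_trans)
qed

lemma Sn_ideal_Fn: "f \<in> Sn_ideal n \<Longrightarrow> f \<in> Fn n"
proof (induction rule: Sn_ideal.induct)
  case (rel r)
  then show ?case unfolding Sn_rels_def by (auto intro!: Fn_diff Fn_delta)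
qed (auto intro: Fn_add Fn_smul Fn_fmul_delta_left Fn_fmul_delta_right)

lemma Sn_ideal_sum:
  assumes "finite S" "\<And>u. u \<in> S \<Longrightarrow> g u \<in> Sn_ideal n"
  shows "(\<lambda>w. \<Sum>u\<in>S. c u * g u w) \<in> Sn_ideal n"
  using assms
proof (induction S rule: finite_induct)
  case empty
  then show ?case by (simp add: Sn_ideal.zero)
next
  case (insert x F)
  then have "(\<lambda>w. (\<lambda>w. c x * g x w) w + (\<lambda>w. \<Sum>u\<in>F. c u * g u w) w) \<in> Sn_ideal n"
    by (intro Sn_ideal.add Sn_ideal.smul) auto
  with insert show ?case by simp
qed

section \<open>S_n-modules and the action of the free algebra\<close>

lemma wact_append: "wact X Y (u @ v) m = wact X Y u (wact X Y v m)"
  by (induction u) auto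

locale smod =
  fixes n :: nat and sc :: "'k::field \<Rightarrow> 'm::ab_group_add \<Rightarrow> 'm"
    and M :: "'m set" and X Y :: "nat \<Rightarrow> 'm \<Rightarrow> 'm"
  assumes smod: "Sn_module n sc M X Y"
begin

sublocale vs: vector_space sc
  using smod unfolding Sn_module_def by auto

lemma M0: "0 \<in> M"
  and Madd: "a \<in> M \<Longrightarrow> b \<in> M \<Longrightarrow> a + b \<in> M"
  and Msc: "a \<in> M \<Longrightarrow> sc c a \<in> M"
  using smod unfolding Sn_module_def vs.subspace_def by auto

lemma Mdiff: "a \<in> M \<Longrightarrow> b \<in> M \<Longrightarrow> a - b \<in> M"
  using Madd[of a "sc (-1) b"] Msc[of b "-1"] by simp

lemma Msum: "finite S \<Longrightarrow> (\<And>x. x \<in> S \<Longrightarrow> g x \<in> M) \<Longrightarrow> sum g S \<in> M"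
  by (induction S rule: finite_induct) (auto intro: M0 Madd)

lemma Xc: "i < n \<Longrightarrow> m \<in> M \<Longrightarrow> X i m \<in> M"
  and Yc: "i < n \<Longrightarrow> m \<in> M \<Longrightarrow> Y i m \<in> M"
  and Xsc: "i < n \<Longrightarrow> m \<in> M \<Longrightarrow> X i (sc c m) = sc c (X i m)"
  and Ysc: "i < n \<Longrightarrow> m \<in> M \<Longrightarrow> Y i (sc c m) = sc c (Y i m)"
  and YX: "i < n \<Longrightarrow> m \<in> M \<Longrightarrow> Y i (X i m) = m"
  using smod unfolding Sn_module_def by auto

lemma comm: "i < n \<Longrightarrow> j < n \<Longrightarrow> i \<noteq> j \<Longrightarrow> m \<in> M \<Longrightarrow>
   X i (Y j m) = Y j (X i m) \<and> X i (X j m) = X j (X i m) \<and> Y i (Y j m) = Y j (Y i m)"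
  using smod unfolding Sn_module_def by blast

lemma letter_closed: "gen_idx a < n \<Longrightarrow> m \<in> M \<Longrightarrow> letter_act X Y a m \<in> M"
  by (cases a) (auto intro: Xc Yc)

lemma letter_add: "gen_idx a < n \<Longrightarrow> m \<in> M \<Longrightarrow> m' \<in> M \<Longrightarrow>
    letter_act X Y a (m + m') = letter_act X Y a m + letter_act X Y a m'"
  using smod by (cases a) (auto simp: Sn_module_def)

lemma letter_sc: "gen_idx a < n \<Longrightarrow> m \<in> M \<Longrightarrow> letter_act X Y a (sc c m) = sc c (letter_act X Y a m)"
  by (cases a) (auto simp: Xsc Ysc)

lemma W_closed: "w \<in> words n \<Longrightarrow> m \<in> M \<Longrightarrow> wact X Y w m \<in> M"
  by (induction w) (auto intro: letter_closed)

lemma W_add: "w \<in> words n \<Longrightarrow> m \<in> M \<Longrightarrow> m' \<in> M \<Longrightarrow>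
    wact X Y w (m + m') = wact X Y w m + wact X Y w m'"
  by (induction w) (auto simp: letter_add W_closed)

lemma W_sc: "w \<in> words n \<Longrightarrow> m \<in> M \<Longrightarrow> wact X Y w (sc c m) = sc c (wact X Y w m)"
  by (induction w) (auto simp: letter_sc W_closed)

lemma W_zero: "w \<in> words n \<Longrightarrow> wact X Y w 0 = 0"
  using W_sc[of w 0 0] M0 by simp

lemma W_diff: "w \<in> words n \<Longrightarrow> m \<in> M \<Longrightarrow> m' \<in> M \<Longrightarrow>
    wact X Y w (m - m') = wact X Y w m - wact X Y w m'"
  using W_add[of w m "sc (-1) m'"] W_sc[of w m' "-1"] Msc[of m' "-1"] by simp

lemma W_sum:
  assumes "w \<in> words n" "finite S" "\<And>x. x \<in> S \<Longrightarrow> g x \<in> M"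
  shows "wact X Y w (sum g S) = (\<Sum>x\<in>S. wact X Y w (g x))"
  using assms(2,3) by (induction S rule: finite_induct) (auto simp: W_zero W_add Msum assms(1))

lemma X_zero: "i < n \<Longrightarrow> X i 0 = 0"
  and Y_zero: "i < n \<Longrightarrow> Y i 0 = 0"
  using W_zero[of "[Xg i]"] W_zero[of "[Yg i]"] by simp_all

lemma Y_diff: "i < n \<Longrightarrow> m \<in> M \<Longrightarrow> m' \<in> M \<Longrightarrow> Y i (m - m') = Y i m - Y i m'"
  using W_diff[of "[Yg i]"] by simp

lemma actF_superset:
  assumes "finite S" "supp f \<subseteq> S"
  shows "actF sc X Y f m = (\<Sum>w\<in>S. sc (f w) (wact X Y w m))"
  unfolding actF_def
  by (rule sum.mono_neutral_left) (use assms in \<open>auto simp: supp_def\<close>)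

lemma actF_in: "f \<in> Fn n \<Longrightarrow> m \<in> M \<Longrightarrow> actF sc X Y f m \<in> M"
  unfolding actF_def
  by (rule Msum) (auto simp: Fn_iff supp_def intro!: Msc W_closed)

lemma actF_delta: "actF sc X Y (delta u) m = wact X Y u m"
  by (simp add: actF_def delta_def)

lemma actF_zero_vec: "f \<in> Fn n \<Longrightarrow> actF sc X Y f 0 = 0"
  unfolding actF_def by (rule sum.neutral) (auto simp: Fn_iff supp_def W_zero)

lemma actF_add: "f \<in> Fn n \<Longrightarrow> g \<in> Fn n \<Longrightarrow>
   actF sc X Y (\<lambda>w. f w + g w) m = actF sc X Y f m + actF sc X Y g m"
proof -
  assume f: "f \<in> Fn n" and g: "g \<in> Fn n"
  let ?S = "supp f \<union> supp g"
  have fin: "finite ?S" using f g by (auto simp: Fn_iff)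
  have "actF sc X Y (\<lambda>w. f w + g w) m = (\<Sum>w\<in>?S. sc (f w + g w) (wact X Y w m))"
    by (rule actF_superset[OF fin]) (auto simp: supp_def)
  also have "\<dots> = (\<Sum>w\<in>?S. sc (f w) (wact X Y w m)) + (\<Sum>w\<in>?S. sc (g w) (wact X Y w m))"
    by (simp add: vs.scale_left_distrib sum.distrib)
  also have "\<dots> = actF sc X Y f m + actF sc X Y g m"
    using actF_superset[OF fin, of f m] actF_superset[OF fin, of g m] by auto
  finally show ?thesis .
qed

lemma actF_smul: "f \<in> Fn n \<Longrightarrow> actF sc X Y (\<lambda>w. c * f w) m = sc c (actF sc X Y f m)"
proof -
  assume f: "f \<in> Fn n"
  have fin: "finite (supp f)" using f by (auto simp: Fn_iff)
  have "actF sc X Y (\<lambda>w. c * f w) m = (\<Sum>w\<in>supp f. sc (c * f w) (wact X Y w m))"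
    by (rule actF_superset[OF fin]) (auto simp: supp_def)
  also have "\<dots> = sc c (actF sc X Y f m)"
    using fin by (simp add: vs.scale_sum_right actF_superset)
  finally show ?thesis .
qed

lemma actF_diff: "f \<in> Fn n \<Longrightarrow> g \<in> Fn n \<Longrightarrow>
   actF sc X Y (\<lambda>w. f w - g w) m = actF sc X Y f m - actF sc X Y g m"
  using actF_add[of f "\<lambda>w. (-1) * g w" m] actF_smul[of g "-1" m] Fn_smul[of g n "-1"] by simp

lemma actF_sum:
  assumes "finite S" "\<And>u. u \<in> S \<Longrightarrow> g u \<in> Fn n"
  shows "actF sc X Y (\<lambda>w. \<Sum>u\<in>S. c u * g u w) m = (\<Sum>u\<in>S. sc (c u) (actF sc X Y (g u) m))"
  using assms
proof (induction S rule: finite_induct)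
  case empty
  then show ?case by (simp add: actF_def)
next
  case (insert x F)
  have "(\<lambda>w. \<Sum>u\<in>F. c u * g u w) \<in> Fn n"
    using insert(1,4) by (induction F rule: finite_induct) (auto intro!: Fn_add Fn_smul)
  with insert show ?case by (simp add: actF_add Fn_smul actF_smul)
qed

lemma actF_lmul:
  assumes f: "f \<in> Fn n" and u: "u \<in> words n" and m: "m \<in> M"
  shows "actF sc X Y (fmul (delta u) f) m = wact X Y u (actF sc X Y f m)"
proof -
  have fin: "finite (supp f)" and sw: "supp f \<subseteq> words n" using f by (auto simp: Fn_iff)
  have "actF sc X Y (fmul (delta u) f) m
      = (\<Sum>w\<in>(\<lambda>v. u @ v) ` supp f. sc (fmul (delta u) f w) (wact X Y w m))"
    by (rule actF_superset) (use fin in \<open>auto simp: supp_fmul_delta_left\<close>)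
  also have "\<dots> = (\<Sum>v\<in>supp f. sc (f v) (wact X Y u (wact X Y v m)))"
    by (subst sum.reindex) (auto simp: inj_on_def fmul_delta_left wact_append)
  also have "\<dots> = (\<Sum>v\<in>supp f. wact X Y u (sc (f v) (wact X Y v m)))"
    using sw m u by (intro sum.cong) (auto simp: W_sc W_closed)
  also have "\<dots> = wact X Y u (\<Sum>v\<in>supp f. sc (f v) (wact X Y v m))"
    using sw m u fin by (subst W_sum) (auto intro!: Msc W_closed)
  also have "\<dots> = wact X Y u (actF sc X Y f m)"
    using fin by (simp add: actF_superset)
  finally show ?thesis .
qed

lemma actF_rmul: "f \<in> Fn n \<Longrightarrow> actF sc X Y (fmul f (delta u)) m = actF sc X Y f (wact X Y u m)"
proof -
  assume f: "f \<in> Fn n"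
  have fin: "finite (supp f)" using f by (auto simp: Fn_iff)
  have "actF sc X Y (fmul f (delta u)) m
      = (\<Sum>w\<in>(\<lambda>v. v @ u) ` supp f. sc (fmul f (delta u) w) (wact X Y w m))"
    by (rule actF_superset) (use fin in \<open>auto simp: supp_fmul_delta_right\<close>)
  also have "\<dots> = (\<Sum>v\<in>supp f. sc (f v) (wact X Y v (wact X Y u m)))"
    by (subst sum.reindex) (auto simp: inj_on_def fmul_delta_right wact_append)
  also have "\<dots> = actF sc X Y f (wact X Y u m)"
    using fin by (simp add: actF_superset)
  finally show ?thesis .
qed

lemma actF_mult:
  assumes a: "a \<in> Fn n" and r: "r \<in> Fn n" and m: "m \<in> M"
  shows "actF sc X Y (fmul a r) m = actF sc X Y a (actF sc X Y r m)"
proof -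
  have fin: "finite (supp a)" and sw: "supp a \<subseteq> words n" using a by (auto simp: Fn_iff)
  have "actF sc X Y (fmul a r) m = actF sc X Y (\<lambda>w. \<Sum>u\<in>supp a. a u * fmul (delta u) r w) m"
    by (simp add: fmul_expand[OF fin])
  also have "\<dots> = (\<Sum>u\<in>supp a. sc (a u) (actF sc X Y (fmul (delta u) r) m))"
    using sw r by (intro actF_sum fin) (auto intro: Fn_fmul_delta_left)
  also have "\<dots> = (\<Sum>u\<in>supp a. sc (a u) (wact X Y u (actF sc X Y r m)))"
    using sw r m by (intro sum.cong) (auto simp: actF_lmul)
  also have "\<dots> = actF sc X Y a (actF sc X Y r m)"
    using fin by (simp add: actF_superset)
  finally show ?thesis .
qed

lemma ideal_sound: "f \<in> Sn_ideal n \<Longrightarrow> m \<in> M \<Longrightarrow> actF sc X Y f m = 0"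
proof (induction arbitrary: m rule: Sn_ideal.induct)
  case (rel r)
  then show ?case
    unfolding Sn_rels_def by (auto simp: actF_diff Fn_delta actF_delta YX comm)
next
  case zero
  then show ?case by (simp add: actF_def)
qed (simp_all add: actF_add actF_smul actF_lmul actF_rmul Sn_ideal_Fn W_zero W_closed)

definition submod :: "'m set \<Rightarrow> bool" where
  "submod U \<longleftrightarrow> vs.subspace U \<and> U \<subseteq> M \<and> (\<forall>i<n. \<forall>u\<in>U. X i u \<in> U \<and> Y i u \<in> U)"

lemma simple_iff: "Sn_simple n sc M X Y \<longleftrightarrow> M \<noteq> {0} \<and> (\<forall>U. submod U \<longrightarrow> U = {0} \<or> U = M)"
  by (simp add: Sn_simple_def submod_def)

lemma submod_wact: "submod U \<Longrightarrow> w \<in> words n \<Longrightarrow> u \<in> U \<Longrightarrow> wact X Y w u \<in> U"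
  unfolding submod_def by (induction w) (auto, metis letter_act.simps gen.exhaust gen_idx.simps)

definition cyclic :: "'m \<Rightarrow> 'm set" where
  "cyclic q = {actF sc X Y r q | r. r \<in> Fn n}"

lemma submod_cyclic:
  assumes q: "q \<in> M"
  shows "submod (cyclic q)"
  unfolding submod_def vs.subspace_def
proof (intro conjI ballI allI impI subsetI)
  have "0 = actF sc X Y (\<lambda>w. 0) q" by (simp add: actF_def)
  then show "0 \<in> cyclic q" unfolding cyclic_def using Fn_zero[of n] by blast
next
  fix x y assume "x \<in> cyclic q" "y \<in> cyclic q"
  then obtain f g where "f \<in> Fn n" "g \<in> Fn n" "x = actF sc X Y f q" "y = actF sc X Y g q"
    unfolding cyclic_def by blast
  then have "x + y = actF sc X Y (\<lambda>w. f w + g w) q" "(\<lambda>w. f w + g w) \<in> Fn n"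
    by (simp_all add: actF_add Fn_add)
  then show "x + y \<in> cyclic q" unfolding cyclic_def by blast
next
  fix c x assume "x \<in> cyclic q"
  then obtain f where "f \<in> Fn n" "x = actF sc X Y f q" unfolding cyclic_def by blast
  then have "sc c x = actF sc X Y (\<lambda>w. c * f w) q" "(\<lambda>w. c * f w) \<in> Fn n"
    by (simp_all add: actF_smul Fn_smul)
  then show "sc c x \<in> cyclic q" unfolding cyclic_def by blast
next
  fix x assume "x \<in> cyclic q"
  then show "x \<in> M" unfolding cyclic_def using actF_in q by blast
next
  fix i x assume i: "i < n" and "x \<in> cyclic q"
  then obtain f where f: "f \<in> Fn n" "x = actF sc X Y f q" unfolding cyclic_def by blast
  have "X i x = actF sc X Y (fmul (delta [Xg i]) f) q" "Y i x = actF sc X Y (fmul (delta [Yg i]) f) q"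
    using actF_lmul[OF f(1) _ q, of "[Xg i]"] actF_lmul[OF f(1) _ q, of "[Yg i]"] i f(2) by simp_all
  moreover have "fmul (delta [Xg i]) f \<in> Fn n" "fmul (delta [Yg i]) f \<in> Fn n"
    using f i by (simp_all add: Fn_fmul_delta_left)
  ultimately show "X i x \<in> cyclic q" "Y i x \<in> cyclic q" unfolding cyclic_def by blast+
qed

lemma simple_cyclic:
  assumes simple: "Sn_simple n sc M X Y" and q: "q \<in> M" "q \<noteq> 0"
  shows "cyclic q = M"
proof -
  have "q \<in> cyclic q"
    unfolding cyclic_def using actF_delta[of "[]" q] Fn_delta[of "[]" n] by force
  then show ?thesis
    using simple submod_cyclic[OF q(1)] q(2) unfolding simple_iff by blast
qed

end

section \<open>Normal forms of words in S_n\<close>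

text \<open>Two words are congruent when they represent the same element of S_n, i.e. when
  their difference lies in the defining ideal.\<close>

definition wcong :: "nat \<Rightarrow> 'k::field itself \<Rightarrow> gen list \<Rightarrow> gen list \<Rightarrow> bool" where
  "wcong n T u v \<longleftrightarrow> (\<lambda>w. (delta u w :: 'k) - delta v w) \<in> Sn_ideal n"

lemma wc_refl: "wcong n TYPE('k::field) u u"
  unfolding wcong_def using Sn_ideal.zero by simp

lemma wc_trans [trans]: "wcong n TYPE('k::field) u v \<Longrightarrow> wcong n TYPE('k) v x \<Longrightarrow> wcong n TYPE('k) u x"
  unfolding wcong_def by (drule (1) Sn_ideal.add) simp

lemma wc_sym: "wcong n TYPE('k::field) u v \<Longrightarrow> wcong n TYPE('k) v u"
  unfolding wcong_def by (drule Sn_ideal.smul[where c = "-1"]) simp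

lemma fmul_diff_left: "fmul (\<lambda>w. f w - g w) h = (\<lambda>w. fmul f h w - fmul g h w)"
  by (simp add: fmul_def left_diff_distrib sum_subtractf)

lemma fmul_diff_right: "fmul h (\<lambda>w. f w - g w) = (\<lambda>w. fmul h f w - fmul h g w)"
  by (simp add: fmul_def right_diff_distrib sum_subtractf)

lemma fmul_delta_delta: "fmul (delta u) (delta v) = (delta (u @ v) :: gen list \<Rightarrow> 'k::field)"
proof
  fix w
  show "fmul (delta u) (delta v) w = (delta (u @ v) w :: 'k)"
    unfolding fmul_delta_left by (auto simp: delta_def) (metis append_take_drop_id)
qed

text \<open>Congruence is compatible with concatenation, since the ideal is two-sided.\<close>

lemma wc_ctx:
  assumes "wcong n TYPE('k::field) u v" "p \<in> words n" "q \<in> words n"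
  shows "wcong n TYPE('k) (p @ u @ q) (p @ v @ q)"
  using Sn_ideal.lmul[OF Sn_ideal.rmul[OF assms(1)[unfolded wcong_def] assms(3)] assms(2)]
  unfolding wcong_def by (simp add: fmul_diff_left fmul_diff_right fmul_delta_delta)

lemma wc_ctxL: "wcong n TYPE('k::field) u v \<Longrightarrow> p \<in> words n \<Longrightarrow> wcong n TYPE('k) (p @ u) (p @ v)"
  using wc_ctx[of n u v p "[]"] by simp
lemma wc_ctxR: "wcong n TYPE('k::field) u v \<Longrightarrow> q \<in> words n \<Longrightarrow> wcong n TYPE('k) (u @ q) (v @ q)"
  using wc_ctx[of n u v "[]" q] by simp

lemma wc_YX: "i < n \<Longrightarrow> wcong n TYPE('k::field) [Yg i, Xg i] []"
  unfolding wcong_def by (rule Sn_ideal.rel) (auto simp: Sn_rels_def)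
lemma wc_XY: "i < n \<Longrightarrow> j < n \<Longrightarrow> i \<noteq> j \<Longrightarrow> wcong n TYPE('k::field) [Xg i, Yg j] [Yg j, Xg i]"
  unfolding wcong_def by (rule Sn_ideal.rel) (unfold Sn_rels_def, blast)
lemma wc_XX: "i < n \<Longrightarrow> j < n \<Longrightarrow> i \<noteq> j \<Longrightarrow> wcong n TYPE('k::field) [Xg i, Xg j] [Xg j, Xg i]"
  unfolding wcong_def by (rule Sn_ideal.rel) (unfold Sn_rels_def, blast)
lemma wc_YY: "i < n \<Longrightarrow> j < n \<Longrightarrow> i \<noteq> j \<Longrightarrow> wcong n TYPE('k::field) [Yg i, Yg j] [Yg j, Yg i]"
  unfolding wcong_def by (rule Sn_ideal.rel) (unfold Sn_rels_def, blast)

lemma wc_commute: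
  assumes "gen_idx c < n" "u \<in> words n" "\<forall>l\<in>set u. wcong n TYPE('k::field) [c, l] [l, c]"
  shows "wcong n TYPE('k) (c # u) (u @ [c])"
  using assms
proof (induction u)
  case Nil
  then show ?case using wc_refl[where 'k='k] by simp
next
  case (Cons l u)
  have "wcong n TYPE('k) (c # l # u) (l # c # u)"
    using wc_ctxR[where 'k='k, of n "[c, l]" "[l, c]" u] Cons by simp
  also have "wcong n TYPE('k) \<dots> (l # u @ [c])"
    using wc_ctxL[where 'k='k, of n "c # u" "u @ [c]" "[l]"] Cons by simp
  finally show ?case by simp
qed

text \<open>mono_word L k a is the word L_{k-1}^{a_{k-1}} ... L_0^{a_0}; for L = Xg it
  represents the monomial x^a, for L = Yg the monomial y^a.\<close>

fun mono_word :: "(nat \<Rightarrow> gen) \<Rightarrow> nat \<Rightarrow> (nat \<Rightarrow> nat) \<Rightarrow> gen list" where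
  "mono_word L 0 a = []"
| "mono_word L (Suc k) a = replicate (a k) (L k) @ mono_word L k a"

lemma mono_word_upd: "k \<le> j \<Longrightarrow> mono_word L k (a(j := x)) = mono_word L k a"
  by (induction k) auto

lemma mono_word_words: "(\<And>j. gen_idx (L j) = j) \<Longrightarrow> k \<le> n \<Longrightarrow> mono_word L k a \<in> words n"
  by (induction k) (auto simp: words_def)

lemma mono_word_zero: "mono_word L k (\<lambda>_. 0) = []"
  by (induction k) auto

lemma push_same:
  assumes Lidx: "\<And>j. gen_idx (L j) = j"
    and Lcomm: "\<And>i j. i < n \<Longrightarrow> j < n \<Longrightarrow> i \<noteq> j \<Longrightarrow> wcong n TYPE('k::field) [L i, L j] [L j, L i]"
  shows "i < k \<Longrightarrow> k \<le> n \<Longrightarrow> wcong n TYPE('k) (L i # mono_word L k a) (mono_word L k (a(i := a i + 1)))"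
proof (induction k)
  case (Suc k)
  let ?R = "replicate (a k) (L k)"
  show ?case
  proof (cases "i = k")
    case True
    have raised: "mono_word L (Suc k) (a(k := a k + 1)) = replicate (a k + 1) (L k) @ mono_word L k a"
      by (simp only: mono_word.simps fun_upd_same mono_word_upd[of k k] le_refl)
    show ?thesis unfolding True raised using wc_refl[where 'k='k] by simp
  next
    case False
    then have ik: "i < k" and kn: "k \<le> n" using Suc.prems by auto
    have Rw: "?R \<in> words n" using Suc.prems Lidx by (auto simp: words_def)
    have "wcong n TYPE('k) (L i # ?R) (?R @ [L i])"
      using Suc.prems Rw False by (intro wc_commute) (auto simp: Lidx intro: Lcomm)
    from wc_ctxR[OF this mono_word_words[OF Lidx kn]]
    have "wcong n TYPE('k) (L i # mono_word L (Suc k) a) (?R @ L i # mono_word L k a)" by simp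
    also have "wcong n TYPE('k) \<dots> (?R @ mono_word L k (a(i := a i + 1)))"
      by (rule wc_ctxL[OF Suc.IH[OF ik kn] Rw])
    also have "\<dots> = mono_word L (Suc k) (a(i := a i + 1))"
      using False by simp
    finally show ?thesis .
  qed
qed simp

lemma push_X: "i < k \<Longrightarrow> k \<le> n \<Longrightarrow> wcong n TYPE('k::field) (Xg i # mono_word Xg k a) (mono_word Xg k (a(i := a i + 1)))"
  by (rule push_same) (auto intro: wc_XX)
lemma push_Y: "i < k \<Longrightarrow> k \<le> n \<Longrightarrow> wcong n TYPE('k::field) (Yg i # mono_word Yg k a) (mono_word Yg k (a(i := a i + 1)))"
  by (rule push_same) (auto intro: wc_YY)

text \<open>The key rewriting rule: y_i x^a equals x^(a - e_i) if a_i \<ge> 1 (using y_i x_i = 1), and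
  x^a y_i otherwise (using that y_i commutes with x_j for j \<noteq> i).\<close>

lemma Y_past_X:
  assumes "i < n"
  shows "k \<le> n \<Longrightarrow> wcong n TYPE('k::field) (Yg i # mono_word Xg k a)
     (if i < k \<and> 1 \<le> a i then mono_word Xg k (a(i := a i - 1)) else mono_word Xg k a @ [Yg i])"
proof (induction k)
  case (Suc k)
  let ?R = "replicate (a k) (Xg k)"
  have Rw: "?R \<in> words n" using Suc.prems by (auto simp: words_def)
  have rw: "mono_word Xg k a \<in> words n" by (rule mono_word_words) (use Suc.prems in auto)
  show ?case
  proof (cases "i = k")
    case True
    show ?thesis
    proof (cases "a k")
      case (Suc r)
      have "replicate r (Xg k) @ mono_word Xg k a \<in> words n" using Suc.prems rw by (auto simp: words_def)
      then have "wcong n TYPE('k) ([] @ [Yg k, Xg k] @ replicate r (Xg k) @ mono_word Xg k a)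
          ([] @ [] @ replicate r (Xg k) @ mono_word Xg k a)"
        using Suc.prems by (intro wc_ctx wc_YX) auto
      then show ?thesis using True Suc by (simp add: mono_word_upd)
    qed (use Suc.IH Suc.prems True in simp)
  next
    case False
    have "wcong n TYPE('k) (Yg i # ?R) (?R @ [Yg i])"
      using Suc.prems Rw False assms by (intro wc_commute) (auto intro: wc_sym[OF wc_XY])
    from wc_ctxR[OF this rw]
    have "wcong n TYPE('k) (Yg i # mono_word Xg (Suc k) a) (?R @ Yg i # mono_word Xg k a)" by simp
    also have "wcong n TYPE('k) \<dots> (?R @ (if i < k \<and> 1 \<le> a i then mono_word Xg k (a(i := a i - 1))
        else mono_word Xg k a @ [Yg i]))"
      by (rule wc_ctxL[OF Suc.IH Rw]) (use Suc.prems in simp)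
    also have "\<dots> = (if i < Suc k \<and> 1 \<le> a i then mono_word Xg (Suc k) (a(i := a i - 1))
        else mono_word Xg (Suc k) a @ [Yg i])"
    proof -
      have cond: "(i < Suc k \<and> 1 \<le> a i) = (i < k \<and> 1 \<le> a i)" and neq: "k \<noteq> i" using False by auto
      show ?thesis unfolding cond
        by (cases "i < k \<and> 1 \<le> a i")
          (simp_all only: simp_thms if_True if_False mono_word.simps fun_upd_other[OF neq] append_assoc)
    qed
    finally show ?thesis .
  qed
qed (use wc_refl[where 'k='k] in simp)

text \<open>Every word is congruent to a normal word x^a y^b.  The exponents (a, b) = nf w are
  computed by feeding the letters of w, from right to left, into the rules above.\<close>

fun nf :: "gen list \<Rightarrow> (nat \<Rightarrow> nat) \<times> (nat \<Rightarrow> nat)" where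
  "nf [] = (\<lambda>_. 0, \<lambda>_. 0)"
| "nf (Xg i # w) = (case nf w of (a, b) \<Rightarrow> (a(i := a i + 1), b))"
| "nf (Yg i # w) = (case nf w of (a, b) \<Rightarrow> if 1 \<le> a i then (a(i := a i - 1), b) else (a, b(i := b i + 1)))"

definition normal_word :: "nat \<Rightarrow> (nat \<Rightarrow> nat) \<times> (nat \<Rightarrow> nat) \<Rightarrow> gen list" where
  "normal_word n ab = mono_word Xg n (fst ab) @ mono_word Yg n (snd ab)"

lemma normal_word_words: "normal_word n ab \<in> words n"
  by (auto simp: normal_word_def intro: mono_word_words)

lemma nf_cong: "w \<in> words n \<Longrightarrow> wcong n TYPE('k::field) w (normal_word n (nf w))"
proof (induction w rule: nf.induct)
  case 1
  then show ?case by (simp add: normal_word_def mono_word_zero wc_refl)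
next
  case (2 i w)
  obtain a b where ab: "nf w = (a, b)" by fastforce
  have i: "i < n" and w: "w \<in> words n" using 2 by auto
  have "wcong n TYPE('k) (Xg i # w) (Xg i # mono_word Xg n a @ mono_word Yg n b)"
    using wc_ctxL[OF 2(1)[OF w], of "[Xg i]"] i ab by (simp add: normal_word_def)
  also have "wcong n TYPE('k) \<dots> (mono_word Xg n (a(i := a i + 1)) @ mono_word Yg n b)"
    using wc_ctxR[OF push_X[OF i order.refl], of "mono_word Yg n b" a] by (simp add: mono_word_words)
  finally show ?case using ab by (simp add: normal_word_def)
next
  case (3 i w)
  obtain a b where ab: "nf w = (a, b)" by fastforce
  have i: "i < n" and w: "w \<in> words n" using 3 by auto
  have "wcong n TYPE('k) (Yg i # w) (Yg i # mono_word Xg n a @ mono_word Yg n b)"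
    using wc_ctxL[OF 3(1)[OF w], of "[Yg i]"] i ab by (simp add: normal_word_def)
  also have "wcong n TYPE('k) \<dots>
     ((if 1 \<le> a i then mono_word Xg n (a(i := a i - 1)) else mono_word Xg n a @ [Yg i]) @ mono_word Yg n b)"
    using wc_ctxR[OF Y_past_X[OF i order.refl], of "mono_word Yg n b" a] i by (simp add: mono_word_words)
  finally have reduced: "wcong n TYPE('k) (Yg i # w)
     ((if 1 \<le> a i then mono_word Xg n (a(i := a i - 1)) else mono_word Xg n a @ [Yg i]) @ mono_word Yg n b)" .
  show ?case
  proof (cases "1 \<le> a i")
    case True
    then show ?thesis using reduced ab by (simp add: normal_word_def)
  next
    case False
    have "wcong n TYPE('k) (Yg i # w) (mono_word Xg n a @ Yg i # mono_word Yg n b)"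
      using reduced False by simp
    also have "wcong n TYPE('k) \<dots> (mono_word Xg n a @ mono_word Yg n (b(i := b i + 1)))"
      using wc_ctxL[OF push_Y[OF i order.refl], of "mono_word Xg n a" b] by (simp add: mono_word_words)
    finally show ?thesis using ab False by (simp add: normal_word_def)
  qed
qed


lemma (in smod) wcong_act:
  assumes "wcong n TYPE('k) u v" "u \<in> words n" "v \<in> words n" "m \<in> M"
  shows "wact X Y u m = wact X Y v m"
  using ideal_sound[OF assms(1)[unfolded wcong_def] assms(4)] assms(2,3)
  by (simp add: actF_diff Fn_delta actF_delta)

section \<open>The polynomial module P_n\<close>

definition bounded_exp :: "nat \<Rightarrow> (nat \<Rightarrow> nat) \<Rightarrow> bool" where
  "bounded_exp n a \<longleftrightarrow> (\<forall>j\<ge>n. a j = 0)"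

lemma nf_bounded: "w \<in> words n \<Longrightarrow> bounded_exp n (fst (nf w)) \<and> bounded_exp n (snd (nf w))"
  unfolding bounded_exp_def
  by (induction w rule: nf.induct) (auto split: prod.splits)

lemma Pn_iff: "p \<in> Pn n \<longleftrightarrow> finite {\<alpha>. p \<alpha> \<noteq> 0} \<and> (\<forall>\<alpha>. p \<alpha> \<noteq> 0 \<longrightarrow> bounded_exp n \<alpha>)"
  by (simp add: Pn_def bounded_exp_def)

lemma Pscale_vs: "vector_space (Pscale :: 'k::field \<Rightarrow> ((nat \<Rightarrow> nat) \<Rightarrow> 'k) \<Rightarrow> _)"
  by unfold_locales (auto simp: Pscale_def fun_eq_iff algebra_simps)

lemma Pn_add: "p \<in> Pn n \<Longrightarrow> q \<in> Pn n \<Longrightarrow> p + q \<in> Pn n"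
proof -
  assume p: "p \<in> Pn n" and q: "q \<in> Pn n"
  have "{\<alpha>. (p + q) \<alpha> \<noteq> 0} \<subseteq> {\<alpha>. p \<alpha> \<noteq> 0} \<union> {\<alpha>. q \<alpha> \<noteq> 0}" by auto
  moreover have "\<forall>\<alpha>. (p + q) \<alpha> \<noteq> 0 \<longrightarrow> bounded_exp n \<alpha>"
    using p q unfolding Pn_iff by (metis add.right_neutral plus_fun_apply)
  ultimately show ?thesis using p q unfolding Pn_iff by (meson finite_UnI finite_subset)
qed

lemma Pn_scale: "p \<in> Pn n \<Longrightarrow> Pscale c p \<in> Pn n"
proof -
  assume p: "p \<in> Pn n"
  have "{\<alpha>. Pscale c p \<alpha> \<noteq> 0} \<subseteq> {\<alpha>. p \<alpha> \<noteq> 0}" by (auto simp: Pscale_def)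
  with p show ?thesis unfolding Pn_iff by (auto simp: Pscale_def intro: finite_subset)
qed

lemma Pn_xop: "i < n \<Longrightarrow> p \<in> Pn n \<Longrightarrow> xop i p \<in> Pn n"
proof -
  assume i: "i < n" and p: "p \<in> Pn n"
  have "{\<alpha>. xop i p \<alpha> \<noteq> 0} \<subseteq> (\<lambda>\<beta>. \<beta>(i := \<beta> i + 1)) ` {\<alpha>. p \<alpha> \<noteq> 0}"
  proof
    fix \<alpha> assume "\<alpha> \<in> {\<alpha>. xop i p \<alpha> \<noteq> 0}"
    then have h: "1 \<le> \<alpha> i" "p (\<alpha>(i := \<alpha> i - 1)) \<noteq> 0" by (auto simp: xop_def split: if_splits)
    then have "\<alpha> = (\<alpha>(i := \<alpha> i - 1))(i := (\<alpha>(i := \<alpha> i - 1)) i + 1)" by (auto simp: fun_eq_iff)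
    with h show "\<alpha> \<in> (\<lambda>\<beta>. \<beta>(i := \<beta> i + 1)) ` {\<alpha>. p \<alpha> \<noteq> 0}" by blast
  qed
  moreover have "bounded_exp n \<alpha>" if "xop i p \<alpha> \<noteq> 0" for \<alpha>
    unfolding bounded_exp_def
  proof (intro allI impI)
    fix j assume "n \<le> j"
    moreover have "p (\<alpha>(i := \<alpha> i - 1)) \<noteq> 0" using that by (auto simp: xop_def split: if_splits)
    ultimately show "\<alpha> j = 0" using p i unfolding Pn_iff bounded_exp_def by (metis fun_upd_other not_le)
  qed
  ultimately show ?thesis using p unfolding Pn_iff by (meson finite_imageI finite_subset)
qed

lemma Pn_yop: "i < n \<Longrightarrow> p \<in> Pn n \<Longrightarrow> yop i p \<in> Pn n"
proof -
  assume i: "i < n" and p: "p \<in> Pn n"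
  have "{\<alpha>. yop i p \<alpha> \<noteq> 0} \<subseteq> (\<lambda>\<beta>. \<beta>(i := \<beta> i - 1)) ` {\<alpha>. p \<alpha> \<noteq> 0}"
  proof
    fix \<alpha> assume "\<alpha> \<in> {\<alpha>. yop i p \<alpha> \<noteq> 0}"
    then have h: "p (\<alpha>(i := \<alpha> i + 1)) \<noteq> 0" by (auto simp: yop_def)
    have "\<alpha> = (\<alpha>(i := \<alpha> i + 1))(i := (\<alpha>(i := \<alpha> i + 1)) i - 1)" by (auto simp: fun_eq_iff)
    with h show "\<alpha> \<in> (\<lambda>\<beta>. \<beta>(i := \<beta> i - 1)) ` {\<alpha>. p \<alpha> \<noteq> 0}" by blast
  qed
  moreover have "bounded_exp n \<alpha>" if "yop i p \<alpha> \<noteq> 0" for \<alpha>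
    unfolding bounded_exp_def
  proof (intro allI impI)
    fix j assume "n \<le> j"
    moreover have "p (\<alpha>(i := \<alpha> i + 1)) \<noteq> 0" using that by (simp add: yop_def)
    ultimately show "\<alpha> j = 0" using p i unfolding Pn_iff bounded_exp_def by (metis fun_upd_other not_le)
  qed
  ultimately show ?thesis using p unfolding Pn_iff by (meson finite_imageI finite_subset)
qed

lemma Pn_module: "Sn_module n (Pscale :: 'k::field \<Rightarrow> _) (Pn n) xop yop"
  unfolding Sn_module_def
proof (intro conjI)
  show "vector_space (Pscale :: 'k \<Rightarrow> _)" by (rule Pscale_vs)
  interpret P: vector_space "Pscale :: 'k \<Rightarrow> _" by (rule Pscale_vs)
  show "P.subspace (Pn n)"
    unfolding P.subspace_def by (auto intro: Pn_add Pn_scale simp: Pn_iff[of 0])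
  show "\<forall>i<n. \<forall>m\<in>Pn n. xop i m \<in> Pn n \<and> yop i m \<in> Pn n" by (auto intro: Pn_xop Pn_yop)
  show "\<forall>i<n. \<forall>m\<in>Pn n. \<forall>m'\<in>Pn n. xop i (m + m') = xop i m + xop i m' \<and> yop i (m + m') = yop i m + yop i m'"
    by (auto simp: xop_def yop_def fun_eq_iff)
  show "\<forall>i<n. \<forall>c. \<forall>m\<in>Pn n. xop i (Pscale c m) = Pscale c (xop i m) \<and> yop i (Pscale c m) = Pscale c (yop i m)"
    by (auto simp: xop_def yop_def Pscale_def fun_eq_iff)
  show "\<forall>i<n. \<forall>m\<in>Pn n. yop i (xop i m) = m"
    by (auto simp: xop_def yop_def fun_eq_iff)
  show "\<forall>i<n. \<forall>j<n. i \<noteq> j \<longrightarrow> (\<forall>m\<in>Pn n. xop i (yop j m) = yop j (xop i m) \<and>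
      xop i (xop j m) = xop j (xop i m) \<and> yop i (yop j m) = yop j (yop i m))"
    by (auto simp: xop_def yop_def fun_eq_iff fun_upd_twist)
qed

interpretation Pn: smod n "Pscale :: 'k::field \<Rightarrow> _" "Pn n" xop yop for n
  by (rule smod.intro, rule Pn_module)

lemma wact_repX:
  "wact xop yop (replicate m (Xg i)) p = (\<lambda>\<gamma>. if m \<le> \<gamma> i then p (\<gamma>(i := \<gamma> i - m)) else 0)"
  by (induction m) (auto simp: xop_def fun_eq_iff)

lemma wact_repY: "wact xop yop (replicate m (Yg i)) p = (\<lambda>\<gamma>. p (\<gamma>(i := \<gamma> i + m)))"
  by (induction m) (auto simp: yop_def fun_eq_iff intro!: arg_cong[where f=p])

lemma wact_monoX: "wact xop yop (mono_word Xg k a) p =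
  (\<lambda>\<gamma>. if (\<forall>j<k. a j \<le> \<gamma> j) then p (\<lambda>j. if j < k then \<gamma> j - a j else \<gamma> j) else 0)"
proof (induction k)
  case (Suc k)
  have "(a k \<le> \<gamma> k \<and> (\<forall>j<k. a j \<le> (\<gamma>(k := \<gamma> k - a k)) j)) = (\<forall>j<Suc k. a j \<le> \<gamma> j)"
    and "(\<lambda>j. if j < k then (\<gamma>(k := \<gamma> k - a k)) j - a j else (\<gamma>(k := \<gamma> k - a k)) j)
       = (\<lambda>j. if j < Suc k then \<gamma> j - a j else \<gamma> j)" for \<gamma>
    by (auto simp: fun_eq_iff less_Suc_eq)
  then show ?case by (auto simp: fun_eq_iff wact_append wact_repX Suc.IH)
qed simp

lemma wact_monoY: "wact xop yop (mono_word Yg k b) p = (\<lambda>\<gamma>. p (\<lambda>j. if j < k then \<gamma> j + b j else \<gamma> j))"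
proof (induction k)
  case (Suc k)
  have "(\<lambda>j. if j < k then (\<gamma>(k := \<gamma> k + b k)) j + b j else (\<gamma>(k := \<gamma> k + b k)) j)
      = (\<lambda>j. if j < Suc k then \<gamma> j + b j else \<gamma> j)" for \<gamma>
    by (auto simp: fun_eq_iff less_Suc_eq)
  then show ?case by (simp add: fun_eq_iff wact_append wact_repY Suc.IH)
qed simp

definition mon :: "(nat \<Rightarrow> nat) \<Rightarrow> (nat \<Rightarrow> nat) \<Rightarrow> 'k::field" where
  "mon \<beta> = (\<lambda>\<gamma>. if \<gamma> = \<beta> then 1 else 0)"

lemma mon_Pn: "bounded_exp n \<beta> \<Longrightarrow> mon \<beta> \<in> Pn n"
  by (auto simp: Pn_iff mon_def)

lemma mon_nz: "(mon \<beta> :: (nat \<Rightarrow> nat) \<Rightarrow> 'k::field) \<noteq> 0"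
  by (auto simp: mon_def fun_eq_iff)

lemma one_Pn: "(mon (\<lambda>_. 0) :: _ \<Rightarrow> 'k::field) \<in> Pn n"
  by (rule mon_Pn) (simp add: bounded_exp_def)

lemma sum_fun_apply: "(sum g S) x = (\<Sum>s\<in>S. g s x)"
  by (induction S rule: infinite_finite_induct) auto

lemma Pn_expand: "p \<in> Pn n \<Longrightarrow> p = (\<Sum>\<gamma>\<in>{\<alpha>. p \<alpha> \<noteq> 0}. Pscale (p \<gamma>) (mon \<gamma>))"
proof
  fix \<delta> assume p: "p \<in> Pn n"
  have "(\<Sum>\<gamma>\<in>{\<alpha>. p \<alpha> \<noteq> 0}. Pscale (p \<gamma>) (mon \<gamma>)) \<delta> = (\<Sum>\<gamma>\<in>{\<alpha>. p \<alpha> \<noteq> 0}. if \<delta> = \<gamma> then p \<delta> else 0)"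
    unfolding sum_fun_apply by (intro sum.cong refl) (auto simp: Pscale_def mon_def)
  also have "\<dots> = p \<delta>" using p by (simp add: sum.delta Pn_iff)
  finally show "p \<delta> = (\<Sum>\<gamma>\<in>{\<alpha>. p \<alpha> \<noteq> 0}. Pscale (p \<gamma>) (mon \<gamma>)) \<delta>" by simp
qed

lemma mon_gen:
  assumes \<gamma>: "bounded_exp n \<gamma>"
  shows "wact xop yop (mono_word Xg n \<gamma>) (mon (\<lambda>_. 0) :: _ \<Rightarrow> 'k::field) = mon \<gamma>"
proof
  fix \<delta> :: "nat \<Rightarrow> nat"
  have "((\<forall>j<n. \<gamma> j \<le> \<delta> j) \<and> (\<lambda>j. if j < n then \<delta> j - \<gamma> j else \<delta> j) = (\<lambda>_. 0)) \<longleftrightarrow> \<delta> = \<gamma>"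
  proof
    assume h: "(\<forall>j<n. \<gamma> j \<le> \<delta> j) \<and> (\<lambda>j. if j < n then \<delta> j - \<gamma> j else \<delta> j) = (\<lambda>_. 0)"
    show "\<delta> = \<gamma>"
    proof
      fix j
      have "(if j < n then \<delta> j - \<gamma> j else \<delta> j) = 0" using h by metis
      then show "\<delta> j = \<gamma> j" using h \<gamma> unfolding bounded_exp_def
        by (cases "j < n") (auto simp: le_antisym)
    qed
  qed (use \<gamma> in \<open>auto simp: fun_eq_iff bounded_exp_def\<close>)
  moreover have "wact xop yop (mono_word Xg n \<gamma>) (mon (\<lambda>_. 0) :: _ \<Rightarrow> 'k) \<delta> =
     (if (\<forall>j<n. \<gamma> j \<le> \<delta> j) \<and> (\<lambda>j. if j < n then \<delta> j - \<gamma> j else \<delta> j) = (\<lambda>_. 0) then 1 else 0)"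
    by (simp add: wact_monoX mon_def)
  ultimately show "wact xop yop (mono_word Xg n \<gamma>) (mon (\<lambda>_. 0) :: _ \<Rightarrow> 'k) \<delta> = mon \<gamma> \<delta>"
    by (simp add: mon_def)
qed

section \<open>P_n is a simple module\<close>

definition deg :: "nat \<Rightarrow> (nat \<Rightarrow> nat) \<Rightarrow> nat" where
  "deg n \<alpha> = (\<Sum>j<n. \<alpha> j)"

text \<open>Lowering operators: applying y^\<alpha> for a top-degree exponent \<alpha> of p leaves only the
  constant term p_\<alpha>.\<close>

lemma lower_to_constant:
  assumes p: "p \<in> Pn n" "p \<noteq> 0"
  shows "\<exists>\<alpha>. p \<alpha> \<noteq> 0 \<and> wact xop yop (mono_word Yg n \<alpha>) p = Pscale (p \<alpha>) (mon (\<lambda>_. 0))"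
proof -
  define S where "S = {\<alpha>. p \<alpha> \<noteq> 0}"
  have fin: "finite S" and ne: "S \<noteq> {}" using p by (auto simp: Pn_iff S_def fun_eq_iff)
  obtain \<alpha> where \<alpha>: "\<alpha> \<in> S" and top: "\<And>\<beta>. \<beta> \<in> S \<Longrightarrow> deg n \<beta> \<le> deg n \<alpha>"
  proof -
    have "Max (deg n ` S) \<in> deg n ` S" using fin ne by simp
    then obtain \<alpha> where "\<alpha> \<in> S" "deg n \<alpha> = Max (deg n ` S)" by auto
    then show ?thesis using that fin by (metis Max_ge finite_imageI image_eqI)
  qed
  have bounded: "bounded_exp n \<beta>" if "p \<beta> \<noteq> 0" for \<beta> using p that by (simp add: Pn_iff)
  have "p (\<lambda>j. if j < n then \<gamma> j + \<alpha> j else \<gamma> j) = Pscale (p \<alpha>) (mon (\<lambda>_. 0)) \<gamma>" for \<gamma>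
  proof (cases "\<gamma> = (\<lambda>_. 0)")
    case True
    have "(\<lambda>j. if j < n then \<gamma> j + \<alpha> j else \<gamma> j) = \<alpha>"
      using bounded[of \<alpha>] \<alpha> True by (auto simp: fun_eq_iff S_def bounded_exp_def)
    then show ?thesis using True by (simp add: Pscale_def mon_def)
  next
    case False
    then obtain j where j: "\<gamma> j \<noteq> 0" by (auto simp: fun_eq_iff)
    let ?\<beta> = "\<lambda>j. if j < n then \<gamma> j + \<alpha> j else \<gamma> j"
    have "p ?\<beta> = 0"
    proof (rule ccontr)
      assume nz: "p ?\<beta> \<noteq> 0"
      show False
      proof (cases "j < n")
        case True
        then have "deg n \<alpha> < deg n ?\<beta>"
          unfolding deg_def using j by (intro sum_strict_mono_ex1) auto
        with top[of ?\<beta>] nz show False by (simp add: S_def)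
      next
        case False
        with bounded[OF nz] j show False by (auto simp: bounded_exp_def)
      qed
    qed
    then show ?thesis using False by (simp add: Pscale_def mon_def)
  qed
  then show ?thesis using \<alpha> by (auto simp: S_def wact_monoY)
qed

theorem Pn_simple: "Sn_simple n (Pscale :: 'k::field \<Rightarrow> _) (Pn n) xop yop"
  unfolding Pn.simple_iff
proof (intro conjI allI impI)
  show "Pn n \<noteq> {0 :: _ \<Rightarrow> 'k}" using one_Pn mon_nz by blast
  fix U :: "((nat \<Rightarrow> nat) \<Rightarrow> 'k) set"
  assume U: "Pn.submod n U"
  then have sU: "Pn.vs.subspace U" and UP: "U \<subseteq> Pn n" by (auto simp: Pn.submod_def)
  show "U = {0} \<or> U = Pn n"
  proof (cases "U = {0}")
    case False
    then obtain p where pU: "p \<in> U" and "p \<noteq> 0" using Pn.vs.subspace_0[OF sU] by blast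
    then obtain \<alpha> where "p \<alpha> \<noteq> 0" and low: "wact xop yop (mono_word Yg n \<alpha>) p = Pscale (p \<alpha>) (mon (\<lambda>_. 0))"
      using lower_to_constant[of p n] UP by blast
    then have "Pscale (inverse (p \<alpha>)) (wact xop yop (mono_word Yg n \<alpha>) p) = mon (\<lambda>_. 0)"
      by (simp add: Pscale_def fun_eq_iff)
    moreover have "wact xop yop (mono_word Yg n \<alpha>) p \<in> U"
      using U pU by (intro Pn.submod_wact mono_word_words) auto
    ultimately have oneU: "mon (\<lambda>_. 0) \<in> U" by (metis Pn.vs.subspace_scale[OF sU])
    have monU: "mon \<gamma> \<in> U" if "bounded_exp n \<gamma>" for \<gamma>
      using Pn.submod_wact[OF U _ oneU, of "mono_word Xg n \<gamma>"] mon_gen[OF that, where 'k='k] mono_word_words[of Xg n n]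
      by simp
    have "U = Pn n"
    proof
      show "Pn n \<subseteq> U"
      proof
        fix r :: "(nat \<Rightarrow> nat) \<Rightarrow> 'k" assume r: "r \<in> Pn n"
        then have "(\<Sum>\<gamma>\<in>{\<alpha>. r \<alpha> \<noteq> 0}. Pscale (r \<gamma>) (mon \<gamma>)) \<in> U"
          by (intro Pn.vs.subspace_sum[OF sU] Pn.vs.subspace_scale[OF sU] monU) (auto simp: Pn_iff)
        then show "r \<in> U" using Pn_expand[OF r] by simp
      qed
    qed (rule UP)
    then show ?thesis ..
  qed simp
qed

section \<open>P_n is a faithful module\<close>

definition normal_part :: "nat \<Rightarrow> (gen list \<Rightarrow> 'k::field) \<Rightarrow> gen list \<Rightarrow> 'k" where
  "normal_part n f = (\<lambda>w. \<Sum>u\<in>supp f. f u * delta (normal_word n (nf u)) w)"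

lemma normal_part_reduction:
  fixes f :: "gen list \<Rightarrow> 'k::field"
  assumes f: "f \<in> Fn n"
  shows "(\<lambda>w. f w - normal_part n f w) \<in> Sn_ideal n"
proof -
  have fin: "finite (supp f)" and sw: "supp f \<subseteq> words n" using f by (auto simp: Fn_iff)
  have "(\<lambda>w. f w - normal_part n f w)
      = (\<lambda>w. \<Sum>u\<in>supp f. f u * (delta u w - delta (normal_word n (nf u)) w))"
  proof
    fix w
    have "(\<Sum>u\<in>supp f. f u * delta u w) = (\<Sum>u\<in>supp f. if w = u then f u else 0)"
      by (rule sum.cong) (auto simp: delta_def)
    also have "\<dots> = f w" using fin by (simp add: supp_def)
    finally have expand: "(\<Sum>u\<in>supp f. f u * delta u w) = f w" .
    show "f w - normal_part n f w = (\<Sum>u\<in>supp f. f u * (delta u w - delta (normal_word n (nf u)) w))"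
      by (simp only: normal_part_def right_diff_distrib sum_subtractf expand)
  qed
  also have "\<dots> \<in> Sn_ideal n"
    using nf_cong[of _ n, where 'k='k] sw fin by (intro Sn_ideal_sum) (auto simp: wcong_def)
  finally show ?thesis .
qed

lemma normal_part_supp: "supp (normal_part n f) \<subseteq> (\<lambda>u. normal_word n (nf u)) ` supp f"
proof
  fix w assume w: "w \<in> supp (normal_part n f)"
  show "w \<in> (\<lambda>u. normal_word n (nf u)) ` supp f"
  proof (rule ccontr)
    assume "w \<notin> (\<lambda>u. normal_word n (nf u)) ` supp f"
    then have "normal_part n f w = 0" by (auto simp: normal_part_def delta_def intro!: sum.neutral)
    with w show False by (simp add: supp_def)
  qed
qed

lemma normal_part_Fn:
  assumes "f \<in> Fn n"
  shows "normal_part n f \<in> Fn n"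
proof -
  have "(\<lambda>u. normal_word n (nf u)) ` supp f \<subseteq> words n" using normal_word_words by blast
  moreover have "finite ((\<lambda>u. normal_word n (nf u)) ` supp f)" using assms by (simp add: Fn_iff)
  ultimately show ?thesis using normal_part_supp[of n f] unfolding Fn_iff by (blast intro: finite_subset)
qed

lemma normal_part_normal:
  "f \<in> Fn n \<Longrightarrow> w \<in> supp (normal_part n f) \<Longrightarrow>
    \<exists>a b. bounded_exp n a \<and> bounded_exp n b \<and> w = normal_word n (a, b)"
  using normal_part_supp[of n f] nf_bounded[of _ n] by (fastforce simp: Fn_iff)

lemma normal_word_on_mon:
  "wact xop yop (normal_word n (a, b)) (mon b0) a0 =
    (if (\<forall>j<n. a j \<le> a0 j) \<and> (\<forall>j. (if j < n then a0 j - a j + b j else a0 j) = b0 j) then (1::'k::field) else 0)"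
  by (auto simp: normal_word_def wact_append wact_monoX wact_monoY mon_def fun_eq_iff)

lemma normal_word_on_mon_nz:
  assumes bnd: "bounded_exp n a" "bounded_exp n b" "bounded_exp n a0" "bounded_exp n b0"
    and nz: "wact xop yop (normal_word n (a, b)) (mon b0) a0 \<noteq> (0::'k::field)"
  shows "(\<forall>j. b j \<le> b0 j) \<and> (b = b0 \<longrightarrow> a = a0)"
proof -
  have le: "\<forall>j<n. a j \<le> a0 j" and eq: "\<forall>j<n. a0 j - a j + b j = b0 j"
    using nz unfolding normal_word_on_mon by (metis zero_neq_one)+
  have "b j \<le> b0 j" for j
  proof (cases "j < n")
    case True
    with eq have "a0 j - a j + b j = b0 j" by blast
    then show ?thesis by linarith
  qed (use bnd(2) in \<open>simp add: bounded_exp_def\<close>)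
  moreover have "a = a0" if "b = b0"
  proof
    fix j
    show "a j = a0 j"
    proof (cases "j < n")
      case True
      with eq le that have "a0 j - a j + b j = b j" "a j \<le> a0 j" by auto
      then show ?thesis by linarith
    qed (use bnd(1,3) in \<open>simp add: bounded_exp_def\<close>)
  qed
  ultimately show ?thesis by blast
qed

lemma normal_word_on_own_mon:
  "bounded_exp n a \<Longrightarrow> bounded_exp n b \<Longrightarrow> wact xop yop (normal_word n (a, b)) (mon b) a = (1::'k::field)"
  by (auto simp: normal_word_on_mon bounded_exp_def)

text \<open>Distinct normal words act linearly independently on P_n: test a combination on x^b0
  for a normal word x^a0 y^b0 of minimal y-degree and read off the coefficient of x^a0.\<close>

lemma normal_words_independent:
  assumes h: "h \<in> Fn n"
    and normal: "\<And>w. w \<in> supp h \<Longrightarrow> \<exists>a b. bounded_exp n a \<and> bounded_exp n b \<and> w = normal_word n (a, b)"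
    and ann: "\<And>p. p \<in> Pn n \<Longrightarrow> actF Pscale xop yop h p = 0"
  shows "h = (\<lambda>_. 0)"
proof (rule ccontr)
  assume "h \<noteq> (\<lambda>_. 0)"
  then obtain w where "w \<in> supp h" by (auto simp: supp_def)
  then obtain ab where "bounded_exp n (fst ab) \<and> bounded_exp n (snd ab) \<and> normal_word n ab \<in> supp h"
    using normal by fastforce
  from ex_has_least_nat[of "\<lambda>ab. bounded_exp n (fst ab) \<and> bounded_exp n (snd ab) \<and> normal_word n ab \<in> supp h",
      OF this, of "\<lambda>ab. deg n (snd ab)"]
  obtain a0 b0 where a0: "bounded_exp n a0" and b0: "bounded_exp n b0" and w0: "normal_word n (a0, b0) \<in> supp h"
    and least: "\<And>a b. bounded_exp n a \<Longrightarrow> bounded_exp n b \<Longrightarrow> normal_word n (a, b) \<in> supp h \<Longrightarrow> deg n b0 \<le> deg n b"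
    by fastforce
  let ?w0 = "normal_word n (a0, b0)"
  let ?c = "\<lambda>w. h w * wact xop yop w (mon b0) a0"
  have fin: "finite (supp h)" using h by (simp add: Fn_iff)
  have others: "?c w = 0" if w: "w \<in> supp h - {?w0}" for w
  proof (rule ccontr)
    assume "?c w \<noteq> 0"
    obtain a b where bnd: "bounded_exp n a" "bounded_exp n b" and we: "w = normal_word n (a, b)"
      using normal w by blast
    have "\<forall>j. b j \<le> b0 j" and ab: "b = b0 \<longrightarrow> a = a0"
      using normal_word_on_mon_nz[OF bnd a0 b0] \<open>?c w \<noteq> 0\<close> we by auto
    moreover have "deg n b0 \<le> deg n b" using least[OF bnd] w we by blast
    ultimately have "\<forall>j<n. b j = b0 j"
      unfolding deg_def using sum_mono_inv[of b "{..<n}" b0] sum_mono[of "{..<n}" b b0]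
      by (metis le_antisym lessThan_iff finite_lessThan)
    then have "b = b0" using bnd(2) b0 unfolding bounded_exp_def by (metis ext not_le)
    with ab we w show False by simp
  qed
  have "0 = actF Pscale xop yop h (mon b0) a0" using ann[OF mon_Pn[OF b0]] by simp
  also have "\<dots> = (\<Sum>w\<in>supp h. ?c w)"
    by (simp add: actF_def supp_def sum_fun_apply Pscale_def)
  also have "\<dots> = ?c ?w0 + (\<Sum>w\<in>supp h - {?w0}. ?c w)" using fin w0 by (simp add: sum.remove)
  also have "(\<Sum>w\<in>supp h - {?w0}. ?c w) = 0" by (intro sum.neutral ballI others)
  also have "?c ?w0 + 0 = h ?w0" by (simp add: normal_word_on_own_mon[OF a0 b0])
  finally show False using w0 by (simp add: supp_def)
qed

theorem Pn_faithful: "Sn_faithful n (Pscale :: 'k::field \<Rightarrow> _) (Pn n) xop yop"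
  unfolding Sn_faithful_def
proof (intro ballI impI)
  fix f :: "gen list \<Rightarrow> 'k"
  assume f: "f \<in> Fn n" and ann: "\<forall>p\<in>Pn n. actF Pscale xop yop f p = 0"
  let ?g = "normal_part n f"
  have red: "(\<lambda>w. f w - ?g w) \<in> Sn_ideal n" by (rule normal_part_reduction[OF f])
  have "actF Pscale xop yop ?g p = 0" if p: "p \<in> Pn n" for p
    using Pn.ideal_sound[OF red p] ann p f
    by (simp add: Pn.actF_diff normal_part_Fn)
  then have "?g = (\<lambda>_. 0)"
    using normal_words_independent[OF normal_part_Fn[OF f]] normal_part_normal[OF f] by blast
  with red show "f \<in> Sn_ideal n" by simp
qed

section \<open>Module homomorphisms\<close>

locale smod_hom = src: smod n sc M X Y + tgt: smod n sc' M' X' Y'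
  for n :: nat and sc :: "'k::field \<Rightarrow> 'm::ab_group_add \<Rightarrow> 'm" and M X Y
    and sc' :: "'k \<Rightarrow> 'm2::ab_group_add \<Rightarrow> 'm2" and M' X' Y' +
  fixes \<phi> :: "'m \<Rightarrow> 'm2"
  assumes maps: "m \<in> M \<Longrightarrow> \<phi> m \<in> M'"
    and add: "m \<in> M \<Longrightarrow> m' \<in> M \<Longrightarrow> \<phi> (m + m') = \<phi> m + \<phi> m'"
    and scale: "m \<in> M \<Longrightarrow> \<phi> (sc c m) = sc' c (\<phi> m)"
    and comm_X: "i < n \<Longrightarrow> m \<in> M \<Longrightarrow> \<phi> (X i m) = X' i (\<phi> m)"
    and comm_Y: "i < n \<Longrightarrow> m \<in> M \<Longrightarrow> \<phi> (Y i m) = Y' i (\<phi> m)"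
begin

lemma zero: "\<phi> 0 = 0"
  using add[OF src.M0 src.M0] by simp

lemma diff: "m \<in> M \<Longrightarrow> m' \<in> M \<Longrightarrow> \<phi> (m - m') = \<phi> m - \<phi> m'"
  using add[of m "sc (-1) m'"] scale[of m' "-1"] src.Msc[of m' "-1"] by simp

lemma hom_sum: "finite A \<Longrightarrow> (\<And>a. a \<in> A \<Longrightarrow> g a \<in> M) \<Longrightarrow> \<phi> (sum g A) = (\<Sum>a\<in>A. \<phi> (g a))"
  by (induction A rule: finite_induct) (auto simp: zero add src.Msum)

lemma hom_wact: "w \<in> words n \<Longrightarrow> m \<in> M \<Longrightarrow> \<phi> (wact X Y w m) = wact X' Y' w (\<phi> m)"
proof (induction w)
  case (Cons a w)
  then show ?case by (cases a) (auto simp: comm_X comm_Y src.W_closed)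
qed simp

lemma hom_actF:
  assumes f: "f \<in> Fn n" and m: "m \<in> M"
  shows "\<phi> (actF sc X Y f m) = actF sc' X' Y' f (\<phi> m)"
proof -
  have fin: "finite (supp f)" and sw: "supp f \<subseteq> words n" using f by (auto simp: Fn_iff)
  have "\<phi> (actF sc X Y f m) = (\<Sum>w\<in>supp f. \<phi> (sc (f w) (wact X Y w m)))"
    unfolding actF_def supp_def[symmetric] using fin sw m by (intro hom_sum) (auto intro!: src.Msc src.W_closed)
  also have "\<dots> = (\<Sum>w\<in>supp f. sc' (f w) (wact X' Y' w (\<phi> m)))"
    using sw m by (intro sum.cong refl) (auto simp: scale hom_wact src.W_closed)
  finally show ?thesis by (simp add: actF_def supp_def)
qed

lemma image_submod:
  assumes U: "src.submod U"
  shows "tgt.submod (\<phi> ` U)"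
proof -
  have UM: "U \<subseteq> M" and sub: "src.vs.subspace U" and cl: "\<forall>i<n. \<forall>u\<in>U. X i u \<in> U \<and> Y i u \<in> U"
    using U by (auto simp: src.submod_def)
  have "0 \<in> \<phi> ` U" using src.vs.subspace_0[OF sub] zero by force
  moreover have "\<phi> u + \<phi> v \<in> \<phi> ` U" if "u \<in> U" "v \<in> U" for u v
    using that UM add[of u v] src.vs.subspace_add[OF sub] by (metis image_eqI subsetD)
  moreover have "sc' c (\<phi> u) \<in> \<phi> ` U" if "u \<in> U" for c u
    using that UM scale[of u c] src.vs.subspace_scale[OF sub] by (metis image_eqI subsetD)
  moreover have "X' i (\<phi> u) \<in> \<phi> ` U \<and> Y' i (\<phi> u) \<in> \<phi> ` U" if "i < n" "u \<in> U" for i u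
    using that UM cl comm_X[of i u] comm_Y[of i u] by (metis image_eqI subsetD)
  moreover have "\<phi> ` U \<subseteq> M'" using UM maps by auto
  ultimately show ?thesis unfolding tgt.submod_def tgt.vs.subspace_def by blast
qed

lemma kernel_submod: "src.submod {m \<in> M. \<phi> m = 0}"
  unfolding src.submod_def src.vs.subspace_def
  using src.M0 zero
  by (auto simp: src.Madd src.Msc src.Xc src.Yc add scale comm_X comm_Y tgt.X_zero tgt.Y_zero)

lemma faithful_pullback:
  assumes onto: "\<phi> ` M = M'" and faithful: "Sn_faithful n sc' M' X' Y'"
  shows "Sn_faithful n sc M X Y"
  unfolding Sn_faithful_def
proof (intro ballI impI)
  fix f :: "gen list \<Rightarrow> 'k" assume f: "f \<in> Fn n" and ann: "\<forall>m\<in>M. actF sc X Y f m = 0"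
  have "actF sc' X' Y' f m' = 0" if "m' \<in> M'" for m'
    using that onto ann hom_actF[OF f] zero by auto
  then show "f \<in> Sn_ideal n" using faithful f unfolding Sn_faithful_def by blast
qed

lemma simple_pullback:
  assumes bij: "bij_betw \<phi> M M'" and simple: "Sn_simple n sc' M' X' Y'"
  shows "Sn_simple n sc M X Y"
  unfolding src.simple_iff
proof (intro conjI allI impI)
  have inj: "inj_on \<phi> M" and onto: "\<phi> ` M = M'" using bij by (auto simp: bij_betw_def)
  show "M \<noteq> {0}" using simple onto zero unfolding tgt.simple_iff by auto
  fix U assume U: "src.submod U"
  then have UM: "U \<subseteq> M" and U0: "0 \<in> U" by (auto simp: src.submod_def src.vs.subspace_def)
  have "\<phi> ` U = {0} \<or> \<phi> ` U = M'" using simple image_submod[OF U] unfolding tgt.simple_iff by blast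
  then show "U = {0} \<or> U = M"
  proof
    assume "\<phi> ` U = {0}"
    have "U \<subseteq> {0}"
    proof
      fix u assume "u \<in> U"
      then have "\<phi> u = \<phi> 0" using \<open>\<phi> ` U = {0}\<close> zero by auto
      then show "u \<in> {0}" using inj_onD[OF inj] UM src.M0 \<open>u \<in> U\<close> by auto
    qed
    then show ?thesis using U0 by blast
  next
    assume "\<phi> ` U = M'"
    then have "U = M" using inj UM onto by (metis inj_on_image_eq_iff order_refl)
    then show ?thesis ..
  qed
qed

lemma schur:
  assumes "Sn_simple n sc M X Y" "Sn_simple n sc' M' X' Y'" and nz: "m0 \<in> M" "\<phi> m0 \<noteq> 0"
  shows "bij_betw \<phi> M M'"
proof -
  have "{m \<in> M. \<phi> m = 0} = {0}"
    using assms(1) kernel_submod nz unfolding src.simple_iff by blast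
  then have inj: "inj_on \<phi> M"
    by (intro inj_onI) (use diff src.Mdiff in \<open>force simp: set_eq_iff\<close>)
  have "src.submod M"
    unfolding src.submod_def src.vs.subspace_def by (auto simp: src.M0 src.Madd src.Msc src.Xc src.Yc)
  then have "\<phi> ` M = M'"
    using assms(2) image_submod nz unfolding tgt.simple_iff by blast
  with inj show ?thesis by (simp add: bij_betw_def)
qed

lemma inverse:
  assumes bij: "bij_betw \<phi> M M'"
  shows "smod_hom n sc' M' X' Y' sc M X Y (inv_into M \<phi>)"
proof -
  have inv: "inv_into M \<phi> (\<phi> m) = m" if "m \<in> M" for m
    using bij that by (simp add: bij_betw_def inv_into_f_f)
  have pre: "\<exists>m\<in>M. m' = \<phi> m" if "m' \<in> M'" for m'
    using bij that by (auto simp: bij_betw_def)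
  show ?thesis
  proof (unfold_locales)
    fix m' assume "m' \<in> M'"
    then show "inv_into M \<phi> m' \<in> M" using bij by (metis bij_betw_def inv_into_into)
  next
    fix m' m'' assume "m' \<in> M'" "m'' \<in> M'"
    then show "inv_into M \<phi> (m' + m'') = inv_into M \<phi> m' + inv_into M \<phi> m''"
      using pre inv by (metis add src.Madd)
  next
    fix c m' assume "m' \<in> M'"
    then show "inv_into M \<phi> (sc' c m') = sc c (inv_into M \<phi> m')"
      using pre inv by (metis scale src.Msc)
  next
    fix i m' assume "i < n" "m' \<in> M'"
    then show "inv_into M \<phi> (X' i m') = X i (inv_into M \<phi> m')"
      and "inv_into M \<phi> (Y' i m') = Y i (inv_into M \<phi> m')"
      using pre inv by (metis comm_X src.Xc, metis comm_Y src.Yc)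
  qed
qed

end

section \<open>Vacuum vectors and the classification of faithful simple modules\<close>

text \<open>The element \<Prod>_{j<k} (1 - x_j y_j) of the free algebra.  On any module its image
  is killed by y_0, ..., y_{k-1}; on P_n it fixes 1, so it is nonzero in S_n.\<close>

fun vacuum_proj :: "nat \<Rightarrow> gen list \<Rightarrow> 'k::field" where
  "vacuum_proj 0 = delta []"
| "vacuum_proj (Suc k) = (\<lambda>w. vacuum_proj k w - fmul (delta [Xg k, Yg k]) (vacuum_proj k) w)"

lemma vacuum_proj_Fn: "k \<le> n \<Longrightarrow> vacuum_proj k \<in> Fn n"
  by (induction k) (auto intro!: Fn_diff Fn_fmul_delta_left Fn_delta)

lemma (in smod) actF_vacuum_proj_Suc:
  assumes "Suc k \<le> n" "m \<in> M"
  shows "actF sc X Y (vacuum_proj (Suc k)) m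
    = actF sc X Y (vacuum_proj k) m - X k (Y k (actF sc X Y (vacuum_proj k) m))"
  using assms actF_lmul[OF vacuum_proj_Fn _ assms(2), of k "[Xg k, Yg k]"]
  by (simp add: actF_diff vacuum_proj_Fn Fn_fmul_delta_left)

lemma (in smod) Y_vacuum_proj:
  "k \<le> n \<Longrightarrow> m \<in> M \<Longrightarrow> i < k \<Longrightarrow> Y i (actF sc X Y (vacuum_proj k) m) = 0"
proof (induction k arbitrary: i)
  case (Suc k)
  define q where "q = actF sc X Y (vacuum_proj k) m"
  have q: "q \<in> M" unfolding q_def using Suc.prems by (intro actF_in vacuum_proj_Fn) auto
  have k: "k < n" using Suc.prems by simp
  have "Y i (actF sc X Y (vacuum_proj (Suc k)) m) = Y i q - Y i (X k (Y k q))"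
    using actF_vacuum_proj_Suc[OF Suc.prems(1,2)] Y_diff[of i q "X k (Y k q)"] q k Suc.prems
    by (simp add: q_def Xc Yc)
  also have "\<dots> = 0"
  proof (cases "i = k")
    case True
    then show ?thesis using YX[OF k Yc[OF k q]] by simp
  next
    case False
    then have i: "i < k" using Suc.prems by simp
    have "Y i q = 0" unfolding q_def using Suc.IH[of i] Suc.prems i by simp
    moreover have "Y i (X k (Y k q)) = X k (Y k (Y i q))"
      using comm[of k i "Y k q"] comm[of i k q] k i q Yc[OF k q] by simp
    ultimately show ?thesis using k by (simp add: X_zero Y_zero)
  qed
  finally show ?case .
qed simp

lemma vacuum_proj_one: "k \<le> n \<Longrightarrow> actF Pscale xop yop (vacuum_proj k) (mon (\<lambda>_. 0)) = (mon (\<lambda>_. 0) :: _ \<Rightarrow> 'k::field)"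
proof (induction k)
  case 0
  then show ?case using Pn.actF_delta[of "[]"] by simp
next
  case (Suc k)
  have "yop k (mon (\<lambda>_. 0) :: _ \<Rightarrow> 'k) = 0" "xop k (0 :: _ \<Rightarrow> 'k) = 0"
    by (auto simp: yop_def xop_def mon_def fun_eq_iff)
  moreover have "actF Pscale xop yop (vacuum_proj (Suc k)) (mon (\<lambda>_. 0) :: _ \<Rightarrow> 'k)
    = actF Pscale xop yop (vacuum_proj k) (mon (\<lambda>_. 0))
      - xop k (yop k (actF Pscale xop yop (vacuum_proj k) (mon (\<lambda>_. 0))))"
    by (rule Pn.actF_vacuum_proj_Suc[OF Suc.prems one_Pn])
  ultimately show ?case using Suc by simp
qed

lemma vacuum_proj_notin_ideal: "(vacuum_proj n :: gen list \<Rightarrow> 'k::field) \<notin> Sn_ideal n"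
proof
  assume "vacuum_proj n \<in> (Sn_ideal n :: (gen list \<Rightarrow> 'k) set)"
  then have "actF Pscale xop yop (vacuum_proj n) (mon (\<lambda>_. 0)) = (0 :: _ \<Rightarrow> 'k)"
    using Pn.ideal_sound one_Pn by blast
  then show False using vacuum_proj_one[of n n, where 'k='k] mon_nz[of "\<lambda>_. 0", where 'k='k] by simp
qed

lemma inj_raise: "inj_on (\<lambda>\<beta> :: nat \<Rightarrow> nat. \<beta>(i := \<beta> i + 1)) UNIV"
  by (rule inj_onI) (metis add_right_cancel fun_upd_eqD fun_upd_idem_iff fun_upd_upd)

lemma inj_lower: "inj_on (\<lambda>\<beta> :: nat \<Rightarrow> nat. \<beta>(i := \<beta> i - 1)) {\<beta>. 1 \<le> \<beta> i}"
proof (rule inj_onI)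
  fix x y :: "nat \<Rightarrow> nat"
  assume xy: "x \<in> {\<beta>. 1 \<le> \<beta> i}" "y \<in> {\<beta>. 1 \<le> \<beta> i}" and e: "x(i := x i - 1) = y(i := y i - 1)"
  show "x = y"
  proof
    fix j
    show "x j = y j"
    proof (cases "j = i")
      case True
      have "x i - 1 = y i - 1" using e by (metis fun_upd_same)
      then show ?thesis using xy True by auto
    next
      case False
      then show ?thesis using e by (metis fun_upd_other)
    qed
  qed
qed

text \<open>A vacuum vector m0 (one killed by all y_i) generates a copy of P_n: the map
  p \<mapsto> p(x) m0 is a homomorphism P_n \<rightarrow> M sending 1 to m0.\<close>

locale vacuum = smod n sc M X Y
  for n and sc :: "'k::field \<Rightarrow> 'm::ab_group_add \<Rightarrow> 'm" and M X Y +
  fixes m0 :: 'm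
  assumes m0_in: "m0 \<in> M" and Y_m0: "i < n \<Longrightarrow> Y i m0 = 0"
begin

definition vmon where
  "vmon \<gamma> = wact X Y (mono_word Xg n \<gamma>) m0"

definition poly_image where
  "poly_image p = (\<Sum>\<gamma>\<in>{\<alpha>. p \<alpha> \<noteq> 0}. sc (p \<gamma>) (vmon \<gamma>))"

lemma vmon_in: "vmon \<gamma> \<in> M"
  unfolding vmon_def by (intro W_closed m0_in mono_word_words) auto

lemma X_vmon: "i < n \<Longrightarrow> X i (vmon \<gamma>) = vmon (\<gamma>(i := \<gamma> i + 1))"
  using wcong_act[OF push_X[of i n n \<gamma>] _ _ m0_in] mono_word_words[of Xg n n]
  by (simp add: vmon_def)

lemma Y_vmon: "i < n \<Longrightarrow> Y i (vmon \<gamma>) = (if 1 \<le> \<gamma> i then vmon (\<gamma>(i := \<gamma> i - 1)) else 0)"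
  using wcong_act[OF Y_past_X[of i n n \<gamma>] _ _ m0_in] mono_word_words[of Xg n n]
  by (auto simp: vmon_def wact_append Y_m0 W_zero split: if_splits)

lemma poly_image_superset:
  "finite A \<Longrightarrow> {\<alpha>. p \<alpha> \<noteq> 0} \<subseteq> A \<Longrightarrow> poly_image p = (\<Sum>\<gamma>\<in>A. sc (p \<gamma>) (vmon \<gamma>))"
  unfolding poly_image_def by (rule sum.mono_neutral_left) auto

lemma poly_image_add: "p \<in> Pn n \<Longrightarrow> q \<in> Pn n \<Longrightarrow> poly_image (p + q) = poly_image p + poly_image q"
proof -
  assume pq: "p \<in> Pn n" "q \<in> Pn n"
  let ?A = "{\<alpha>. p \<alpha> \<noteq> 0} \<union> {\<alpha>. q \<alpha> \<noteq> 0}"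
  have fin: "finite ?A" using pq by (simp add: Pn_iff)
  have "poly_image (p + q) = (\<Sum>\<gamma>\<in>?A. sc (p \<gamma> + q \<gamma>) (vmon \<gamma>))"
    by (subst poly_image_superset[OF fin]) auto
  also have "\<dots> = poly_image p + poly_image q"
    by (simp add: vs.scale_left_distrib sum.distrib poly_image_superset[OF fin])
  finally show ?thesis .
qed

lemma poly_image_scale: "p \<in> Pn n \<Longrightarrow> poly_image (Pscale c p) = sc c (poly_image p)"
proof -
  assume p: "p \<in> Pn n"
  then have fin: "finite {\<alpha>. p \<alpha> \<noteq> 0}" by (simp add: Pn_iff)
  have "poly_image (Pscale c p) = (\<Sum>\<gamma>\<in>{\<alpha>. p \<alpha> \<noteq> 0}. sc (c * p \<gamma>) (vmon \<gamma>))"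
    by (subst poly_image_superset[OF fin]) (auto simp: Pscale_def)
  then show ?thesis by (simp add: poly_image_def vs.scale_sum_right)
qed

text \<open>Reindexing the sum along the shift \<gamma> \<mapsto> \<gamma> + e_i turns x_i p into X_i applied termwise.\<close>

lemma poly_image_xop:
  assumes p: "p \<in> Pn n" and i: "i < n"
  shows "poly_image (xop i p) = X i (poly_image p)"
proof -
  let ?A = "{\<alpha>. p \<alpha> \<noteq> 0}"
  define up where "up \<beta> = \<beta>(i := \<beta> i + 1)" for \<beta> :: "nat \<Rightarrow> nat"
  have fin: "finite ?A" using p by (simp add: Pn_iff)
  have inj: "inj_on up ?A"
    using inj_on_subset[OF inj_raise[of i], of ?A] by (simp add: up_def[abs_def])
  have "{\<alpha>. xop i p \<alpha> \<noteq> 0} \<subseteq> up ` ?A"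
  proof
    fix \<alpha> assume "\<alpha> \<in> {\<alpha>. xop i p \<alpha> \<noteq> 0}"
    then have h: "1 \<le> \<alpha> i" "p (\<alpha>(i := \<alpha> i - 1)) \<noteq> 0" by (auto simp: xop_def split: if_splits)
    then have "\<alpha> = up (\<alpha>(i := \<alpha> i - 1))" by (auto simp: fun_eq_iff up_def)
    with h show "\<alpha> \<in> up ` ?A" by blast
  qed
  then have "poly_image (xop i p) = (\<Sum>\<gamma>\<in>up ` ?A. sc (xop i p \<gamma>) (vmon \<gamma>))"
    using fin by (intro poly_image_superset) auto
  also have "\<dots> = (\<Sum>\<beta>\<in>?A. sc (xop i p (up \<beta>)) (vmon (up \<beta>)))"
    by (rule sum.reindex[OF inj, unfolded comp_def])
  also have "\<dots> = (\<Sum>\<beta>\<in>?A. sc (p \<beta>) (X i (vmon \<beta>)))"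
    by (intro sum.cong refl) (simp add: xop_def up_def X_vmon[OF i])
  also have "\<dots> = X i (poly_image p)"
    using W_sum[of "[Xg i]" ?A "\<lambda>\<beta>. sc (p \<beta>) (vmon \<beta>)"] fin i
    by (simp add: poly_image_def Xsc vmon_in Msc)
  finally show ?thesis .
qed

text \<open>Similarly y_i p corresponds to the shift \<gamma> \<mapsto> \<gamma> - e_i on exponents with \<gamma>_i \<ge> 1, the
  remaining terms being killed by Y_i.\<close>

lemma poly_image_yop:
  assumes p: "p \<in> Pn n" and i: "i < n"
  shows "poly_image (yop i p) = Y i (poly_image p)"
proof -
  let ?A = "{\<alpha>. p \<alpha> \<noteq> 0}"
  let ?B = "{\<beta> \<in> ?A. 1 \<le> \<beta> i}"
  define down where "down \<beta> = \<beta>(i := \<beta> i - 1)" for \<beta> :: "nat \<Rightarrow> nat"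
  have fin: "finite ?A" using p by (simp add: Pn_iff)
  have inj: "inj_on down ?B"
    using inj_on_subset[OF inj_lower[of i], of ?B] by (auto simp: down_def[abs_def])
  have "{\<alpha>. yop i p \<alpha> \<noteq> 0} \<subseteq> down ` ?B"
  proof
    fix \<alpha> assume "\<alpha> \<in> {\<alpha>. yop i p \<alpha> \<noteq> 0}"
    then have "\<alpha>(i := \<alpha> i + 1) \<in> ?B" by (simp add: yop_def)
    moreover have "\<alpha> = down (\<alpha>(i := \<alpha> i + 1))" by (auto simp: fun_eq_iff down_def)
    ultimately show "\<alpha> \<in> down ` ?B" by blast
  qed
  then have "poly_image (yop i p) = (\<Sum>\<gamma>\<in>down ` ?B. sc (yop i p \<gamma>) (vmon \<gamma>))"
    using fin by (intro poly_image_superset) auto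
  also have "\<dots> = (\<Sum>\<beta>\<in>?B. sc (yop i p (down \<beta>)) (vmon (down \<beta>)))"
    by (rule sum.reindex[OF inj, unfolded comp_def])
  also have "\<dots> = (\<Sum>\<beta>\<in>?B. sc (p \<beta>) (vmon (down \<beta>)))"
  proof (intro sum.cong refl)
    fix \<beta> assume "\<beta> \<in> ?B"
    then have "(down \<beta>)(i := down \<beta> i + 1) = \<beta>" by (auto simp: fun_eq_iff down_def)
    then show "sc (yop i p (down \<beta>)) (vmon (down \<beta>)) = sc (p \<beta>) (vmon (down \<beta>))"
      by (simp add: yop_def)
  qed
  also have "\<dots> = (\<Sum>\<beta>\<in>?A. if 1 \<le> \<beta> i then sc (p \<beta>) (vmon (down \<beta>)) else 0)"
    by (rule sum.inter_filter[OF fin])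
  also have "\<dots> = (\<Sum>\<beta>\<in>?A. Y i (sc (p \<beta>) (vmon \<beta>)))"
    by (intro sum.cong refl) (simp add: Ysc[OF i vmon_in] Y_vmon[OF i] down_def)
  also have "\<dots> = Y i (poly_image p)"
    using W_sum[of "[Yg i]" ?A "\<lambda>\<beta>. sc (p \<beta>) (vmon \<beta>)"] fin i
    by (simp add: poly_image_def vmon_in Msc)
  finally show ?thesis .
qed

lemma poly_image_hom: "smod_hom n Pscale (Pn n) xop yop sc M X Y poly_image"
proof (intro smod_hom.intro smod_hom_axioms.intro smod.intro Pn_module smod)
  show "poly_image p \<in> M" if "p \<in> Pn n" for p
    using that unfolding poly_image_def by (intro Msum Msc vmon_in) (auto simp: Pn_iff)
qed (simp_all add: poly_image_add poly_image_scale poly_image_xop poly_image_yop)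

lemma poly_image_one: "poly_image (mon (\<lambda>_. 0)) = m0"
proof -
  have "{\<alpha>. (mon (\<lambda>_. 0) :: _ \<Rightarrow> 'k) \<alpha> \<noteq> 0} = {\<lambda>_. 0}" by (auto simp: mon_def)
  then show ?thesis by (simp add: poly_image_def mon_def vmon_def mono_word_zero)
qed

end

context smod
begin

lemma iso_Pn_iff:
  "Sn_iso_Pn n sc M X Y \<longleftrightarrow> (\<exists>\<phi>. smod_hom n sc M X Y Pscale (Pn n) xop yop \<phi> \<and> bij_betw \<phi> M (Pn n))"
proof
  assume "Sn_iso_Pn n sc M X Y"
  then obtain \<phi> where bij: "bij_betw \<phi> M (Pn n)"
    and add: "\<forall>m\<in>M. \<forall>m'\<in>M. \<phi> (m + m') = \<phi> m + \<phi> m'"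
    and scale: "\<forall>c. \<forall>m\<in>M. \<phi> (sc c m) = Pscale c (\<phi> m)"
    and gens: "\<forall>i<n. \<forall>m\<in>M. \<phi> (X i m) = xop i (\<phi> m) \<and> \<phi> (Y i m) = yop i (\<phi> m)"
    unfolding Sn_iso_Pn_def by (auto simp: plus_fun_def)
  have "smod_hom n sc M X Y Pscale (Pn n) xop yop \<phi>"
    using bij add scale gens by unfold_locales (auto simp: Pn_module bij_betw_def)
  with bij show "\<exists>\<phi>. smod_hom n sc M X Y Pscale (Pn n) xop yop \<phi> \<and> bij_betw \<phi> M (Pn n)" by blast
next
  assume "\<exists>\<phi>. smod_hom n sc M X Y Pscale (Pn n) xop yop \<phi> \<and> bij_betw \<phi> M (Pn n)"
  then obtain \<phi> where "smod_hom n sc M X Y Pscale (Pn n) xop yop \<phi>" "bij_betw \<phi> M (Pn n)" by blast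
  then show "Sn_iso_Pn n sc M X Y"
    unfolding Sn_iso_Pn_def smod_hom_def smod_hom_axioms_def by (auto simp: plus_fun_def)
qed

text \<open>Faithfulness provides a nonzero vacuum vector (the image of \<Prod>(1 - x_j y_j)), which
  gives a nonzero homomorphism P_n \<rightarrow> M, an isomorphism by Schur's lemma.\<close>

theorem faithful_simple_iff_iso:
  "Sn_faithful n sc M X Y \<and> Sn_simple n sc M X Y \<longleftrightarrow> Sn_iso_Pn n sc M X Y"
proof
  assume "Sn_faithful n sc M X Y \<and> Sn_simple n sc M X Y"
  then have faithful: "Sn_faithful n sc M X Y" and simple: "Sn_simple n sc M X Y" by auto
  obtain m where m: "m \<in> M" and nz: "actF sc X Y (vacuum_proj n) m \<noteq> 0"
    using faithful vacuum_proj_notin_ideal vacuum_proj_Fn[of n n] unfolding Sn_faithful_def by blast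
  define m0 where "m0 = actF sc X Y (vacuum_proj n) m"
  interpret vacuum n sc M X Y m0
    using m Y_vacuum_proj[of n m] by unfold_locales (auto simp: m0_def actF_in vacuum_proj_Fn)
  interpret h: smod_hom n Pscale "Pn n" xop yop sc M X Y poly_image by (rule poly_image_hom)
  have "bij_betw poly_image (Pn n) M"
    using h.schur[OF Pn_simple simple one_Pn] poly_image_one nz by (simp add: m0_def)
  then show "Sn_iso_Pn n sc M X Y"
    unfolding iso_Pn_iff using h.inverse bij_betw_inv_into by blast
next
  assume "Sn_iso_Pn n sc M X Y"
  then obtain \<phi> where "smod_hom n sc M X Y Pscale (Pn n) xop yop \<phi>" and bij: "bij_betw \<phi> M (Pn n)"
    unfolding iso_Pn_iff by blast
  then interpret h: smod_hom n sc M X Y Pscale "Pn n" xop yop \<phi> by simp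
  show "Sn_faithful n sc M X Y \<and> Sn_simple n sc M X Y"
    using h.faithful_pullback[OF _ Pn_faithful] h.simple_pullback[OF bij Pn_simple] bij
    by (simp add: bij_betw_def)
qed

definition ann_vec :: "'m \<Rightarrow> (gen list \<Rightarrow> 'k) set" where
  "ann_vec q = {f \<in> Fn n. actF sc X Y f q = 0}"

lemma ann_vec_left_ideal:
  assumes q: "q \<in> M"
  shows "Sn_left_ideal n (ann_vec q)"
  unfolding Sn_left_ideal_def ann_vec_def
  using q by (auto simp: Sn_ideal_Fn ideal_sound actF_add Fn_add Fn_fmul actF_mult actF_zero_vec)

text \<open>In a simple module the annihilator of a nonzero vector is a maximal left ideal: a
  strictly larger left ideal contains some g with g q \<noteq> 0, hence (since g q generates M)
  an element r g with r g q = q, and then also 1 = (1 - r g) + r g.\<close>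

lemma ann_vec_max:
  assumes simple: "Sn_simple n sc M X Y" and q: "q \<in> M" "q \<noteq> 0"
  shows "Sn_max_left_ideal n (ann_vec q)"
  unfolding Sn_max_left_ideal_def
proof (intro conjI allI impI)
  show "Sn_left_ideal n (ann_vec q)" by (rule ann_vec_left_ideal[OF q(1)])
  have one: "(delta [] :: gen list \<Rightarrow> 'k) \<in> Fn n" by (rule Fn_delta) simp
  moreover have "delta [] \<notin> ann_vec q" using q(2) by (simp add: ann_vec_def actF_delta)
  ultimately show "ann_vec q \<noteq> Fn n" by blast
  fix L assume "Sn_left_ideal n L \<and> ann_vec q \<subseteq> L \<and> L \<noteq> Fn n"
  then have L: "Sn_left_ideal n L" and sub: "ann_vec q \<subseteq> L" and proper: "L \<noteq> Fn n" by auto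
  have LF: "L \<subseteq> Fn n" and Ladd: "\<And>f g. f \<in> L \<Longrightarrow> g \<in> L \<Longrightarrow> (\<lambda>w. f w + g w) \<in> L"
    and Lmul: "\<And>r f. r \<in> Fn n \<Longrightarrow> f \<in> L \<Longrightarrow> fmul r f \<in> L"
    using L unfolding Sn_left_ideal_def by blast+
  show "L = ann_vec q"
  proof (rule ccontr)
    assume "L \<noteq> ann_vec q"
    then obtain g where g: "g \<in> L" "g \<notin> ann_vec q" using sub by blast
    then have gF: "g \<in> Fn n" using LF by blast
    have "actF sc X Y g q \<in> M" "actF sc X Y g q \<noteq> 0" using g gF q by (auto simp: ann_vec_def actF_in)
    then have "q \<in> cyclic (actF sc X Y g q)" using simple_cyclic[OF simple] q(1) by blast
    then obtain r where r: "r \<in> Fn n" "q = actF sc X Y r (actF sc X Y g q)" unfolding cyclic_def by blast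
    define h where "h = fmul r g"
    have hL: "h \<in> L" and hF: "h \<in> Fn n" unfolding h_def using Lmul[OF r(1) g(1)] Fn_fmul[OF r(1) gF] by auto
    have "actF sc X Y (\<lambda>w. delta [] w - h w) q = actF sc X Y (delta []) q - actF sc X Y h q"
      by (rule actF_diff[OF one hF])
    also have "\<dots> = 0"
      using r(2) by (simp add: actF_delta h_def actF_mult[OF r(1) gF q(1)])
    finally have "(\<lambda>w. delta [] w - h w) \<in> ann_vec q"
      unfolding ann_vec_def using Fn_diff[OF one hF] by blast
    with sub have "(\<lambda>w. delta [] w - h w) \<in> L" by blast
    from Ladd[OF this hL] have "delta [] \<in> L" by simp
    have "Fn n \<subseteq> L"
    proof
      fix f :: "gen list \<Rightarrow> 'k" assume "f \<in> Fn n"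
      from Lmul[OF this \<open>delta [] \<in> L\<close>] show "f \<in> L" by simp
    qed
    with LF proper show False by blast
  qed
qed

text \<open>A faithful simple module forces the Jacobson radical to vanish: an element of every
  maximal left ideal kills every vector, hence lies in the defining ideal.\<close>

lemma faithful_simple_jacobson:
  assumes faithful: "Sn_faithful n sc M X Y" and simple: "Sn_simple n sc M X Y"
  shows "Sn_jacobson n = (Sn_ideal n :: (gen list \<Rightarrow> 'k) set)"
proof
  show "Sn_jacobson n \<subseteq> (Sn_ideal n :: (gen list \<Rightarrow> 'k) set)"
  proof
    fix a :: "gen list \<Rightarrow> 'k" assume "a \<in> Sn_jacobson n"
    then have a: "a \<in> Fn n" "\<And>L. Sn_max_left_ideal n L \<Longrightarrow> a \<in> L" unfolding Sn_jacobson_def by auto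
    have "actF sc X Y a q = 0" if "q \<in> M" for q
      using a ann_vec_max[OF simple that] actF_zero_vec[OF a(1)] by (cases "q = 0") (auto simp: ann_vec_def)
    then show "a \<in> Sn_ideal n" using faithful a(1) unfolding Sn_faithful_def by blast
  qed
  show "(Sn_ideal n :: (gen list \<Rightarrow> 'k) set) \<subseteq> Sn_jacobson n"
    unfolding Sn_jacobson_def Sn_max_left_ideal_def Sn_left_ideal_def by (auto simp: Sn_ideal_Fn)
qed

text \<open>A faithful simple module makes S_n primitive: the annihilator of M is the largest
  two-sided ideal inside the maximal left ideal ann_vec q.\<close>

lemma faithful_simple_primitive:
  assumes faithful: "Sn_faithful n sc M X Y" and simple: "Sn_simple n sc M X Y"
  shows "Sn_primitive n TYPE('k)"
proof -
  obtain q where q: "q \<in> M" "q \<noteq> 0" using simple M0 unfolding simple_iff by blast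
  have "{a \<in> Fn n. \<forall>r\<in>Fn n. fmul a r \<in> ann_vec q} = Sn_ideal n"
  proof
    show "{a \<in> Fn n. \<forall>r\<in>Fn n. fmul a r \<in> ann_vec q} \<subseteq> Sn_ideal n"
    proof
      fix a assume a: "a \<in> {a \<in> Fn n. \<forall>r\<in>Fn n. fmul a r \<in> ann_vec q}"
      have "actF sc X Y a m = 0" if "m \<in> M" for m
      proof -
        obtain r where "r \<in> Fn n" "m = actF sc X Y r q"
          using simple_cyclic[OF simple q] \<open>m \<in> M\<close> unfolding cyclic_def by blast
        then show ?thesis using a q(1) by (auto simp: ann_vec_def actF_mult)
      qed
      then show "a \<in> Sn_ideal n" using faithful a unfolding Sn_faithful_def by blast
    qed
    show "Sn_ideal n \<subseteq> {a \<in> Fn n. \<forall>r\<in>Fn n. fmul a r \<in> ann_vec q}"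
      using q(1) by (auto simp: ann_vec_def Sn_ideal_Fn Fn_fmul actF_mult ideal_sound actF_in)
  qed
  then show ?thesis unfolding Sn_primitive_def using ann_vec_max[OF simple q] by blast
qed

end

theorem corollary3p3:
  fixes n :: nat
  shows "Sn_module n (Pscale :: 'k::field \<Rightarrow> _) (Pn n) xop yop
    \<and> Sn_faithful n (Pscale :: 'k \<Rightarrow> _) (Pn n) xop yop
    \<and> Sn_simple n (Pscale :: 'k \<Rightarrow> _) (Pn n) xop yop
    \<and> (\<forall>(sc :: 'k \<Rightarrow> 'm::ab_group_add \<Rightarrow> 'm) M X Y.
          Sn_module n sc M X Y \<longrightarrow>
          ((Sn_faithful n sc M X Y \<and> Sn_simple n sc M X Y) \<longleftrightarrow> Sn_iso_Pn n sc M X Y))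
    \<and> Sn_jacobson n = (Sn_ideal n :: (gen list \<Rightarrow> 'k) set)
    \<and> Sn_primitive n TYPE('k)"
proof (intro conjI allI impI)
  show "Sn_module n (Pscale :: 'k \<Rightarrow> _) (Pn n) xop yop" by (rule Pn_module)
  show "Sn_faithful n (Pscale :: 'k \<Rightarrow> _) (Pn n) xop yop" by (rule Pn_faithful)
  show "Sn_simple n (Pscale :: 'k \<Rightarrow> _) (Pn n) xop yop" by (rule Pn_simple)
  show "Sn_jacobson n = (Sn_ideal n :: (gen list \<Rightarrow> 'k) set)"
    by (rule Pn.faithful_simple_jacobson[OF Pn_faithful Pn_simple])
  show "Sn_primitive n TYPE('k)"
    by (rule Pn.faithful_simple_primitive[OF Pn_faithful Pn_simple])
  fix sc :: "'k \<Rightarrow> 'm \<Rightarrow> 'm" and M X Y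
  assume "Sn_module n sc M X Y"
  then interpret smod n sc M X Y by (rule smod.intro)
  show "(Sn_faithful n sc M X Y \<and> Sn_simple n sc M X Y) \<longleftrightarrow> Sn_iso_Pn n sc M X Y"
    by (rule faithful_simple_iff_iso)
qed

end
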